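(* Let $f\in L^2(\pi)$. Then $\lambda\mapsto\langle f,P_\lambda f\rangle_\pi$, $\lambda\ge1$, is a continuous, non-negative, decreasing, convex function. Moreover: (i) for any $\lambda\ge1$, $\langle f,P_\lambda f\rangle_\pi=0$ if and only if $\|f\|_\pi=0$; (ii) $\lambda\mapsto\langle f,P_\lambda f\rangle_\pi$ is strictly decreasing if and only if $\|f-\mathbb{E}_\pi[f]\|_\pi>0$.
   Context: Let $\pi,q$ be probability densities with respect to a $\sigma$-finite measure $\mu$ on $(\mathbb{X},\mathcal{X})$ with $q(x)>0$ whenever $\pi(x)>0$; $\pi(dx)=\pi(x)\mu(dx)$, $q(dx)=q(x)\mu(dx)$, $\mathbb{S}=\{\pi>0\}$, $w(x)=\pi(x)/q(x)$ on $\mathbb{S}$ and $w=0$ elsewhere. For integer $N\ge1$ and $z_1\in\mathbb{S}$, $P_N(z_1,A)=\int_{\mathbb{X}^{N-1}}\sum_{i=1}^N\frac{w(z_i)}{\sum_{j=1}^Nw(z_j)}\mathbf 1\{z_i\in A\}\prod_{n=2}^Nq(dz_n)$, $P_1(z,\cdot)=\delta_z$. For real $\lambda\ge1$, $P_\lambda=\beta P_{\lfloor\lambda\rfloor}+(1-\beta)P_{\lfloor\lambda\rfloor+1}$ with $\beta=\lfloor\lambda\rfloor+1-\lambda$. $\langle g,h\rangle_\pi=\int gh\,d\pi$, $\|g\|_\pi=\langle g,g\rangle_\pi^{1/2}$, $P_\lambda f(x)=\int f(y)P_\lambda(x,dy)$. *)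

theory Defs
  imports "HOL-Probability.Probability"
begin

definition isw :: "('a \<Rightarrow> real) \<Rightarrow> ('a \<Rightarrow> real) \<Rightarrow> 'a \<Rightarrow> real" where
  "isw p q x = (if p x > 0 then p x / q x else 0)"

text \<open>P_N f (z1): integrate over (z_2,...,z_N) ~ q^(N-1) (product measure indexed by {2..N}),
  with z_1 := x; for N = 1 the product is the one-point measure.\<close>
definition PN :: "'a measure \<Rightarrow> ('a \<Rightarrow> real) \<Rightarrow> ('a \<Rightarrow> real) \<Rightarrow> nat \<Rightarrow> ('a \<Rightarrow> real) \<Rightarrow> 'a \<Rightarrow> real" where
  "PN M p q N f x =
     (\<integral>zs. (let z = zs(1 := x) in
              (\<Sum>i\<in>{1..N}. isw p q (z i) / (\<Sum>j\<in>{1..N}. isw p q (z j)) * f (z i)))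
       \<partial>(\<Pi>\<^sub>M i\<in>{2..N}. density M (\<lambda>y. ennreal (q y))))"

definition Plam :: "'a measure \<Rightarrow> ('a \<Rightarrow> real) \<Rightarrow> ('a \<Rightarrow> real) \<Rightarrow> real \<Rightarrow> ('a \<Rightarrow> real) \<Rightarrow> 'a \<Rightarrow> real" where
  "Plam M p q lam f x =
     (let n = nat \<lfloor>lam\<rfloor>; \<beta> = real n + 1 - lam in
        \<beta> * PN M p q n f x + (1 - \<beta>) * PN M p q (n + 1) f x)"

definition pi_inner :: "'a measure \<Rightarrow> ('a \<Rightarrow> real) \<Rightarrow> ('a \<Rightarrow> real) \<Rightarrow> ('a \<Rightarrow> real) \<Rightarrow> real" where
  "pi_inner M p g h = (\<integral>x. g x * h x \<partial>(density M (\<lambda>y. ennreal (p y))))"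

definition pi_norm :: "'a measure \<Rightarrow> ('a \<Rightarrow> real) \<Rightarrow> ('a \<Rightarrow> real) \<Rightarrow> real" where
  "pi_norm M p g = sqrt (pi_inner M p g g)"

definition pi_mean :: "'a measure \<Rightarrow> ('a \<Rightarrow> real) \<Rightarrow> ('a \<Rightarrow> real) \<Rightarrow> real" where
  "pi_mean M p g = (\<integral>x. g x \<partial>(density M (\<lambda>y. ennreal (p y))))"

end

theory Submission
  imports Defs
begin

text \<open>Write \<open>a\<^sub>N = \<langle>f, P\<^sub>N f\<rangle>\<^sub>\<pi>\<close>; then \<open>\<lambda> \<mapsto> \<langle>f, P\<^sub>\<lambda> f\<rangle>\<^sub>\<pi>\<close> is the piecewise-linear interpolation of
  \<open>(a\<^sub>N)\<close>, so it suffices to show that \<open>(a\<^sub>N)\<close> is a non-negative, decreasing, convex sequence.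
  Writing the inverse of the normalising constant \<open>s\<close> of the resampling step as
  \<open>1 / s = \<integral>\<^sub>0\<^sup>\<infinity> exp (- t s) dt\<close> decouples the \<open>N - 1\<close> independent proposals and yields
  \<open>a\<^sub>N = \<parallel>f\<parallel>\<^sup>2 - \<integral>\<^sub>0\<^sup>\<infinity> \<rho>(t) (N - 1) C(t) L(t)\<^sup>N\<^sup>-\<^sup>2 dt\<close>. Here \<open>L\<close> is the Laplace transform of the
  weight \<open>w\<close> under \<open>q\<close>, \<open>C = - L'\<close>, and \<open>\<rho>(t)\<close> is the variance of \<open>f\<close> under \<open>\<pi>\<close> tilted by
  \<open>exp (- t w)\<close>, which decreases from \<open>V = Var\<^sub>\<pi> f\<close> to \<open>0\<close>. The layer-cake formula turns this into
  the moment representation \<open>a\<^sub>N = (E\<^sub>\<pi> f)\<^sup>2 + \<integral>\<^sub>0\<^sup>V u(y)\<^sup>N\<^sup>-\<^sup>1 dy\<close> with \<open>0 < u \<le> 1\<close>, and \<open>u < 1\<close>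
  near \<open>0\<close>. Such a sequence is decreasing and convex, strictly decreasing when \<open>V > 0\<close>, and
  vanishes only if \<open>\<parallel>f\<parallel> = 0\<close>.\<close>

section \<open>Piecewise-linear interpolation of sequences\<close>

definition lin_interp :: "(nat \<Rightarrow> real) \<Rightarrow> real \<Rightarrow> real" where
  "lin_interp a lam = (let n = nat \<lfloor>lam\<rfloor>; \<beta> = real n + 1 - lam in \<beta> * a n + (1 - \<beta>) * a (n + 1))"

definition chord :: "(nat \<Rightarrow> real) \<Rightarrow> nat \<Rightarrow> real \<Rightarrow> real" where
  "chord a k lam = a k + (lam - real k) * (a (Suc k) - a k)"

lemma lin_interp_eq_chord: "lin_interp a lam = chord a (nat \<lfloor>lam\<rfloor>) lam"
  unfolding lin_interp_def chord_def Let_def by (simp add: algebra_simps)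

lemma nat_floor_bounds:
  assumes "lam \<ge> 1"
  shows "nat \<lfloor>lam\<rfloor> \<ge> 1" "real (nat \<lfloor>lam\<rfloor>) \<le> lam" "lam < real (nat \<lfloor>lam\<rfloor>) + 1"
  using assms by linarith+

lemma lin_interp_nonneg:
  assumes "\<And>n. n \<ge> 1 \<Longrightarrow> 0 \<le> a n" and "lam \<ge> 1"
  shows "0 \<le> lin_interp a lam"
  using nat_floor_bounds[OF assms(2)] assms(1)[of "nat \<lfloor>lam\<rfloor>"] assms(1)[of "nat \<lfloor>lam\<rfloor> + 1"]
  unfolding lin_interp_def Let_def by (intro add_nonneg_nonneg mult_nonneg_nonneg) auto

lemma lin_interp_eq_0_imp:
  assumes "\<And>n. n \<ge> 1 \<Longrightarrow> 0 \<le> a n" and "lam \<ge> 1" and "lin_interp a lam = 0"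
  shows "a (nat \<lfloor>lam\<rfloor>) = 0"
proof -
  let ?n = "nat \<lfloor>lam\<rfloor>"
  let ?\<beta> = "real ?n + 1 - lam"
  have \<beta>: "0 < ?\<beta>" "?\<beta> \<le> 1" and n: "?n \<ge> 1" using nat_floor_bounds[OF assms(2)] by auto
  have "0 \<le> ?\<beta> * a ?n" "0 \<le> (1 - ?\<beta>) * a (?n + 1)" using \<beta> n assms(1) by auto
  moreover have "?\<beta> * a ?n + (1 - ?\<beta>) * a (?n + 1) = 0" using assms(3) by (simp add: lin_interp_def Let_def)
  ultimately have "?\<beta> * a ?n = 0" by linarith
  then show ?thesis using \<beta>(1) by (metis mult_eq_0_iff order_less_irrefl)
qed

lemma convex_on_cong:
  assumes "convex_on S f" and "\<And>x. x \<in> S \<Longrightarrow> f x = g x"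
  shows "convex_on S g"
proof (rule convex_onI[OF _ convex_on_imp_convex[OF assms(1)]])
  fix t :: real and x y assume "0 < t" "t < 1" "x \<in> S" "y \<in> S"
  moreover then have "(1 - t) *\<^sub>R x + t *\<^sub>R y \<in> S"
    using convexD[OF convex_on_imp_convex[OF assms(1)]] by simp
  ultimately show "g ((1 - t) *\<^sub>R x + t *\<^sub>R y) \<le> (1 - t) * g x + t * g y"
    using convex_onD[OF assms(1), of t x y] assms(2) by simp
qed

locale decreasing_convex_seq =
  fixes a :: "nat \<Rightarrow> real"
  assumes decreasing: "\<And>n. n \<ge> 1 \<Longrightarrow> a (Suc n) \<le> a n"
    and convex: "\<And>n. n \<ge> 1 \<Longrightarrow> a (Suc n) - a n \<le> a (Suc (Suc n)) - a (Suc n)"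
begin

lemma chord_le_chord:
  assumes "k \<ge> 1" and "n \<ge> 1" and "real n \<le> lam" "lam \<le> real n + 1"
  shows "chord a k lam \<le> chord a n lam"
proof -
  have chord_step: "chord a (Suc m) lam - chord a m lam
      = (lam - real (Suc m)) * ((a (Suc (Suc m)) - a (Suc m)) - (a (Suc m) - a m))" for m
    unfolding chord_def by (simp add: algebra_simps)
  show ?thesis
  proof (cases "k \<le> n")
    case True
    then show ?thesis
    proof (induction n rule: dec_induct)
      case (step m)
      have "0 \<le> (lam - real (Suc m)) * ((a (Suc (Suc m)) - a (Suc m)) - (a (Suc m) - a m))"
        using step.hyps assms convex[of m] by (intro mult_nonneg_nonneg) auto
      then show ?case using step.IH chord_step[of m] by linarith
    qed simp
  next
    case False
    then have "n \<le> k" by simp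
    then show ?thesis
    proof (induction k rule: dec_induct)
      case (step m)
      have "(lam - real (Suc m)) * ((a (Suc (Suc m)) - a (Suc m)) - (a (Suc m) - a m)) \<le> 0"
        using step.hyps assms convex[of m] by (intro mult_nonpos_nonneg) auto
      then show ?case using step.IH chord_step[of m] by linarith
    qed simp
  qed
qed

lemma chord_le_lin_interp: "k \<ge> 1 \<Longrightarrow> lam \<ge> 1 \<Longrightarrow> chord a k lam \<le> lin_interp a lam"
  unfolding lin_interp_eq_chord using nat_floor_bounds[of lam] by (intro chord_le_chord) auto

lemma convex_on_lin_interp: "convex_on {1..} (lin_interp a)"
proof (rule convex_onI)
  fix t x y :: real assume t: "0 < t" "t < 1" and xy: "x \<in> {1..}" "y \<in> {1..}"
  let ?z = "(1 - t) *\<^sub>R x + t *\<^sub>R y"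
  have "(1 - t) * 1 \<le> (1 - t) * x" "t * 1 \<le> t * y" using t xy by (intro mult_left_mono; simp)+
  then have z: "?z \<ge> 1" by simp
  let ?n = "nat \<lfloor>?z\<rfloor>"
  have n: "?n \<ge> 1" using nat_floor_bounds[OF z] by simp
  have "lin_interp a ?z = chord a ?n ?z" by (rule lin_interp_eq_chord)
  also have "\<dots> = (1 - t) * chord a ?n x + t * chord a ?n y" unfolding chord_def by (simp add: algebra_simps)
  also have "\<dots> \<le> (1 - t) * lin_interp a x + t * lin_interp a y"
    using t xy n by (intro add_mono mult_left_mono chord_le_lin_interp) auto
  finally show "lin_interp a ?z \<le> (1 - t) * lin_interp a x + t * lin_interp a y" .
qed simp

lemma lin_interp_eq_chord_plus:
  "lin_interp a y = chord a (nat \<lfloor>y\<rfloor>) x + (y - x) * (a (Suc (nat \<lfloor>y\<rfloor>)) - a (nat \<lfloor>y\<rfloor>))"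
  unfolding lin_interp_eq_chord chord_def by (simp add: algebra_simps)

lemma lin_interp_antimono:
  assumes "1 \<le> x" "x \<le> y"
  shows "lin_interp a y \<le> lin_interp a x"
proof -
  have n: "nat \<lfloor>y\<rfloor> \<ge> 1" using nat_floor_bounds[of y] assms by simp
  have "(y - x) * (a (Suc (nat \<lfloor>y\<rfloor>)) - a (nat \<lfloor>y\<rfloor>)) \<le> 0"
    using assms decreasing[OF n] by (intro mult_nonneg_nonpos) auto
  then show ?thesis
    using chord_le_lin_interp[OF n assms(1)] unfolding lin_interp_eq_chord_plus[of y x] by linarith
qed

lemma lin_interp_strict_antimono:
  assumes "\<And>n. n \<ge> 1 \<Longrightarrow> a (Suc n) < a n" and "1 \<le> x" "x < y"
  shows "lin_interp a y < lin_interp a x"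
proof -
  have n: "nat \<lfloor>y\<rfloor> \<ge> 1" using nat_floor_bounds[of y] assms by simp
  have "(y - x) * (a (Suc (nat \<lfloor>y\<rfloor>)) - a (nat \<lfloor>y\<rfloor>)) < 0"
    using assms(1)[OF n] assms(3) by (intro mult_pos_neg) auto
  then show ?thesis
    using chord_le_lin_interp[OF n assms(2)] unfolding lin_interp_eq_chord_plus[of y x] by linarith
qed

lemma continuous_on_lin_interp: "continuous_on {1..} (lin_interp a)"
proof -
  have affine: "lin_interp a lam = a 1 + (lam - 1) * (a 2 - a 1)" if "lam \<in> {1..2}" for lam
  proof (cases "lam = 2")
    case False
    then have "nat \<lfloor>lam\<rfloor> = 1" using that by (simp add: nat_eq_iff floor_eq_iff)
    then show ?thesis unfolding lin_interp_eq_chord chord_def by (simp add: numeral_2_eq_2)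
  qed (simp add: lin_interp_def)
  have "continuous_on {1..2} (\<lambda>lam. a 1 + (lam - 1) * (a 2 - a 1))" by (intro continuous_intros)
  then have "continuous_on {1..2} (lin_interp a)" by (rule continuous_on_eq) (simp add: affine)
  moreover have "continuous_on {2..} (lin_interp a)"
    by (rule continuous_on_subset[of "{1<..}"], rule convex_on_continuous)
      (auto intro: convex_on_subset[OF convex_on_lin_interp])
  ultimately have "continuous_on ({1..2} \<union> {2..}) (lin_interp a)"
    by (intro continuous_on_closed_Un) auto
  moreover have "{1..} = {1..2} \<union> {2::real..}" by auto
  ultimately show ?thesis by simp
qed

end

section \<open>Moment sequences on an interval\<close>

definition interval_moment :: "real \<Rightarrow> (real \<Rightarrow> real) \<Rightarrow> nat \<Rightarrow> real" where
  "interval_moment V u n = (\<integral>y. indicator {0<..<V} y * u y ^ n \<partial>lborel)"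

lemma integral_pos_if_pos_on_Ioo:
  fixes h :: "real \<Rightarrow> real"
  assumes "integrable lborel h" and "\<And>y. 0 \<le> h y" and "c > 0" and "\<And>y. 0 < y \<Longrightarrow> y < c \<Longrightarrow> h y > 0"
  shows "(\<integral>y. h y \<partial>lborel) > 0"
proof -
  have "(\<integral>y. h y \<partial>lborel) \<noteq> 0"
  proof
    assume "(\<integral>y. h y \<partial>lborel) = 0"
    then have "AE y in lborel. h y = 0" using assms(1,2) by (subst (asm) integral_nonneg_eq_0_iff_AE) auto
    then have "AE y in lborel. y \<notin> {0<..<c}" by eventually_elim (use assms(4) in force)
    moreover have "{y \<in> space lborel. \<not> y \<notin> {0<..<c}} = {0<..<c}" by auto
    ultimately have "emeasure lborel {0<..<c} = 0" by (subst (asm) AE_iff_measurable[OF _ refl]) auto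
    then show False using assms(3) by simp
  qed
  moreover have "(\<integral>y. h y \<partial>lborel) \<ge> 0" using assms(2) by (simp add: integral_nonneg_AE)
  ultimately show ?thesis by simp
qed

locale unit_bounded_on_interval =
  fixes V :: real and u :: "real \<Rightarrow> real"
  assumes V_nonneg: "0 \<le> V" and u_measurable[measurable]: "u \<in> borel_measurable borel"
    and u_bounds: "\<And>y. 0 < y \<Longrightarrow> y < V \<Longrightarrow> 0 \<le> u y \<and> u y \<le> 1"
begin

lemma integrable_moment: "integrable lborel (\<lambda>y. indicator {0<..<V} y * u y ^ n)"
proof (rule Bochner_Integration.integrable_bound)
  show "integrable lborel (\<lambda>y. indicator {0<..<V} y :: real)" using V_nonneg by simp
  show "AE y in lborel. norm (indicator {0<..<V} y * u y ^ n) \<le> norm (indicator {0<..<V} y :: real)"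
    using u_bounds by (intro AE_I2) (auto simp: indicator_def abs_mult power_le_one)
qed simp

lemma interval_moment_0: "interval_moment V u 0 = V"
  using V_nonneg by (simp add: interval_moment_def)

lemma interval_moment_nonneg: "0 \<le> interval_moment V u n"
  unfolding interval_moment_def using u_bounds by (intro integral_nonneg_AE AE_I2) (auto simp: indicator_def)

lemma interval_moment_diff:
  "interval_moment V u n - interval_moment V u (Suc n) = (\<integral>y. indicator {0<..<V} y * u y ^ n * (1 - u y) \<partial>lborel)"
proof -
  have "(\<lambda>y. indicator {0<..<V} y * u y ^ n * (1 - u y))
      = (\<lambda>y. indicator {0<..<V} y * u y ^ n - indicator {0<..<V} y * u y ^ Suc n)"
    by (simp add: fun_eq_iff algebra_simps)
  then show ?thesis unfolding interval_moment_def using integrable_moment by (simp del: power_Suc)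
qed

lemma interval_moment_Suc_le: "interval_moment V u (Suc n) \<le> interval_moment V u n"
proof -
  have "0 \<le> (\<integral>y. indicator {0<..<V} y * u y ^ n * (1 - u y) \<partial>lborel)"
    using u_bounds by (intro integral_nonneg_AE AE_I2) (auto simp: indicator_def)
  then show ?thesis using interval_moment_diff[of n] by simp
qed

lemma interval_moment_convex:
  "interval_moment V u (Suc n) - interval_moment V u n
     \<le> interval_moment V u (Suc (Suc n)) - interval_moment V u (Suc n)"
proof -
  have "(\<integral>y. indicator {0<..<V} y * u y ^ n * (1 - u y)\<^sup>2 \<partial>lborel)
      = (\<integral>y. indicator {0<..<V} y * u y ^ n - 2 * (indicator {0<..<V} y * u y ^ Suc n)
            + indicator {0<..<V} y * u y ^ Suc (Suc n) \<partial>lborel)"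
    by (intro Bochner_Integration.integral_cong refl) (simp add: power2_eq_square algebra_simps)
  also have "\<dots> = interval_moment V u n - 2 * interval_moment V u (Suc n) + interval_moment V u (Suc (Suc n))"
    unfolding interval_moment_def using integrable_moment by (simp del: power_Suc)
  finally have "interval_moment V u n - 2 * interval_moment V u (Suc n) + interval_moment V u (Suc (Suc n))
      = (\<integral>y. indicator {0<..<V} y * u y ^ n * (1 - u y)\<^sup>2 \<partial>lborel)" ..
  moreover have "0 \<le> (\<integral>y. indicator {0<..<V} y * u y ^ n * (1 - u y)\<^sup>2 \<partial>lborel)"
    using u_bounds by (intro integral_nonneg_AE AE_I2) (auto simp: indicator_def)
  ultimately show ?thesis by simp
qed

lemma interval_moment_pos:
  assumes "V > 0" and "\<And>y. 0 < y \<Longrightarrow> y < V \<Longrightarrow> u y > 0"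
  shows "interval_moment V u n > 0"
  unfolding interval_moment_def using integrable_moment assms u_bounds
  by (intro integral_pos_if_pos_on_Ioo[where c = V]) (auto simp: indicator_def)

lemma interval_moment_Suc_less:
  assumes "V > 0" and "\<And>y. 0 < y \<Longrightarrow> y < V \<Longrightarrow> u y > 0"
    and "c > 0" and "\<And>y. 0 < y \<Longrightarrow> y < c \<Longrightarrow> u y < 1"
  shows "interval_moment V u (Suc n) < interval_moment V u n"
proof -
  have "0 < (\<integral>y. indicator {0<..<V} y * u y ^ n * (1 - u y) \<partial>lborel)"
  proof (rule integral_pos_if_pos_on_Ioo[where c = "min V c"])
    show "integrable lborel (\<lambda>y. indicator {0<..<V} y * u y ^ n * (1 - u y))"
      using integrable_moment[of n] integrable_moment[of "Suc n"] by (simp add: algebra_simps)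
  qed (use assms u_bounds in \<open>auto simp: indicator_def\<close>)
  then show ?thesis using interval_moment_diff[of n] by simp
qed

end

text \<open>From \<open>2 \<bar>a\<bar> \<bar>b\<bar> \<le> a\<^sup>2 + b\<^sup>2\<close> and \<open>v / S \<le> min 1 (v / W)\<close>.\<close>
lemma abs_mult_abs_diff_div_le:
  fixes a b v W S :: real
  assumes "0 < W" "W \<le> S" and "0 \<le> v" "v \<le> S"
  shows "\<bar>a\<bar> * v * \<bar>a - b\<bar> / S \<le> 3/2 * a\<^sup>2 + b\<^sup>2 * v / (2 * W)"
proof -
  have "2 * (\<bar>a\<bar> * \<bar>b\<bar>) \<le> a\<^sup>2 + b\<^sup>2"
    using sum_squares_bound[of "\<bar>a\<bar>" "\<bar>b\<bar>"] by (simp add: power2_eq_square)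
  moreover have "\<bar>a\<bar> * \<bar>a - b\<bar> \<le> \<bar>a\<bar> * (\<bar>a\<bar> + \<bar>b\<bar>)" by (intro mult_left_mono) auto
  ultimately have "\<bar>a\<bar> * \<bar>a - b\<bar> \<le> 3/2 * a\<^sup>2 + b\<^sup>2 / 2" by (simp add: algebra_simps power2_eq_square)
  then have "(\<bar>a\<bar> * \<bar>a - b\<bar>) * (v / S) \<le> (3/2 * a\<^sup>2 + b\<^sup>2 / 2) * (v / S)"
    using assms by (intro mult_right_mono) auto
  moreover have "3/2 * a\<^sup>2 * (v / S) \<le> 3/2 * a\<^sup>2 * 1" using assms by (intro mult_left_mono) auto
  moreover have "b\<^sup>2 / 2 * (v / S) \<le> b\<^sup>2 / 2 * (v / W)" using assms by (intro mult_left_mono divide_left_mono) auto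
  moreover have "(3/2 * a\<^sup>2 + b\<^sup>2 / 2) * (v / S) = 3/2 * a\<^sup>2 * (v / S) + b\<^sup>2 / 2 * (v / S)"
    by (rule distrib_right)
  moreover have "\<bar>a\<bar> * v * \<bar>a - b\<bar> / S = (\<bar>a\<bar> * \<bar>a - b\<bar>) * (v / S)"
    and "3/2 * a\<^sup>2 + b\<^sup>2 * v / (2 * W) = 3/2 * a\<^sup>2 * 1 + b\<^sup>2 / 2 * (v / W)" by simp_all
  ultimately show ?thesis by linarith
qed

lemma
  fixes s :: real assumes "s > 0"
  shows integrable_exp_neg_Ici: "integrable lborel (\<lambda>t. indicator {0..} t * exp (- (t * s)))"
    and integral_exp_neg_Ici: "(\<integral>t. indicator {0..} t * exp (- (t * s)) \<partial>lborel) = 1 / s"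
proof -
  interpret prob_space "density lborel (exponential_density s)"
    by (rule prob_space_exponential_density[OF assms])
  have "exponential_density s t = s * (indicator {0..} t * exp (- (t * s)))" for t
    unfolding exponential_density_def by (auto simp: indicator_def mult.commute)
  then have "ennreal s * (\<integral>\<^sup>+t. ennreal (indicator {0..} t * exp (- (t * s))) \<partial>lborel) = 1"
    using emeasure_space_1 assms
    by (subst nn_integral_cmult[symmetric]) (auto simp: emeasure_density ennreal_mult[symmetric])
  then have "(\<integral>\<^sup>+t. ennreal (indicator {0..} t * exp (- (t * s))) \<partial>lborel) * ennreal s / ennreal s
      = 1 / ennreal s"
    by (simp add: mult.commute)
  then have nn: "(\<integral>\<^sup>+t. ennreal (indicator {0..} t * exp (- (t * s))) \<partial>lborel) = ennreal (1 / s)"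
    using assms divide_ennreal[of 1 s] by (simp add: ennreal_mult_divide_eq)
  show int: "integrable lborel (\<lambda>t. indicator {0..} t * exp (- (t * s)))"
    by (rule integrableI_nonneg) (use nn in auto)
  show "(\<integral>t. indicator {0..} t * exp (- (t * s)) \<partial>lborel) = 1 / s"
    using nn int assms by (subst integral_eq_nn_integral) auto
qed

lemma
  fixes c S :: real assumes "S \<ge> 0" and "S = 0 \<Longrightarrow> c = 0"
  shows integrable_mult_exp_neg_Ici: "integrable lborel (\<lambda>t. c * (indicator {0..} t * exp (- (t * S))))"
    and integral_mult_exp_neg_Ici: "(\<integral>t. c * (indicator {0..} t * exp (- (t * S))) \<partial>lborel) = c / S"
    and integral_norm_mult_exp_neg_Ici:
      "(\<integral>t. norm (c * (indicator {0..} t * exp (- (t * S)))) \<partial>lborel) = \<bar>c\<bar> / S"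
proof -
  have "integrable lborel (\<lambda>t. c * (indicator {0..} t * exp (- (t * S))))
      \<and> (\<integral>t. c * (indicator {0..} t * exp (- (t * S))) \<partial>lborel) = c / S
      \<and> (\<integral>t. norm (c * (indicator {0..} t * exp (- (t * S)))) \<partial>lborel) = \<bar>c\<bar> / S"
  proof (cases "S = 0")
    case False
    then have "S > 0" using assms(1) by simp
    moreover have "norm (c * (indicator {0..} t * exp (- (t * S)))) = \<bar>c\<bar> * (indicator {0..} t * exp (- (t * S)))"
      for t by (simp add: abs_mult indicator_def)
    ultimately show ?thesis using integrable_exp_neg_Ici integral_exp_neg_Ici by simp
  qed (use assms(2) in simp)
  then show "integrable lborel (\<lambda>t. c * (indicator {0..} t * exp (- (t * S))))"
    and "(\<integral>t. c * (indicator {0..} t * exp (- (t * S))) \<partial>lborel) = c / S"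
    and "(\<integral>t. norm (c * (indicator {0..} t * exp (- (t * S)))) \<partial>lborel) = \<bar>c\<bar> / S"
    by auto
qed

lemma
  fixes s T :: real assumes "s \<ge> 0" and "T \<ge> 0"
  shows integrable_exp_neg_Icc: "integrable lborel (\<lambda>t. indicator {0..T} t * (s * exp (- (t * s))))"
    and integral_exp_neg_Icc: "(\<integral>t. indicator {0..T} t * (s * exp (- (t * s))) \<partial>lborel) = 1 - exp (- (T * s))"
proof -
  have c: "continuous_on {0..T} (\<lambda>t. s * exp (- (t * s)))" by (intro continuous_intros)
  show "integrable lborel (\<lambda>t. indicator {0..T} t * (s * exp (- (t * s))))"
    using borel_integrable_atLeastAtMost'[OF c] by (simp add: set_integrable_def)
  have "(\<integral>t. indicator {0..T} t *\<^sub>R (s * exp (- (t * s))) \<partial>lborel) = (- exp (- (T * s))) - (- exp (- (0 * s)))"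
  proof (rule integral_FTC_atLeastAtMost[OF assms(2) _ c])
    fix t assume "0 \<le> t" "t \<le> T"
    have "((\<lambda>t. - exp (- (t * s))) has_real_derivative (s * exp (- (t * s)))) (at t within {0..T})"
      by (auto intro!: derivative_eq_intros)
    then show "((\<lambda>t. - exp (- (t * s))) has_vector_derivative (s * exp (- (t * s)))) (at t within {0..T})"
      by (simp add: has_real_derivative_iff_has_vector_derivative)
  qed
  then show "(\<integral>t. indicator {0..T} t * (s * exp (- (t * s))) \<partial>lborel) = 1 - exp (- (T * s))" by simp
qed

lemma (in pair_sigma_finite)
  fixes g :: "'a \<Rightarrow> real" and h :: "'b \<Rightarrow> real"
  assumes g: "integrable M1 g" and h: "integrable M2 h"
  shows integrable_mult_fst_snd: "integrable (M1 \<Otimes>\<^sub>M M2) (\<lambda>z. g (fst z) * h (snd z))"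
    and integral_mult_fst_snd: "(\<integral>z. g (fst z) * h (snd z) \<partial>(M1 \<Otimes>\<^sub>M M2)) = integral\<^sup>L M1 g * integral\<^sup>L M2 h"
proof -
  have [measurable]: "g \<in> borel_measurable M1" "h \<in> borel_measurable M2" using g h by auto
  show int: "integrable (M1 \<Otimes>\<^sub>M M2) (\<lambda>z. g (fst z) * h (snd z))"
  proof (rule Fubini_integrable)
    have "integrable M1 (\<lambda>x. norm (g x) * (\<integral>y. norm (h y) \<partial>M2))"
      using g by (intro integrable_mult_left) auto
    then show "integrable M1 (\<lambda>x. \<integral>y. norm (g (fst (x, y)) * h (snd (x, y))) \<partial>M2)"
      by (simp add: abs_mult)
  qed (use h in auto)
  show "(\<integral>z. g (fst z) * h (snd z) \<partial>(M1 \<Otimes>\<^sub>M M2)) = integral\<^sup>L M1 g * integral\<^sup>L M2 h"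
    using integral_fst'[OF int] by simp
qed

lemma
  fixes g h :: "'a \<Rightarrow> real"
  assumes N: "prob_space N" and I: "finite I" "i \<in> I" and g: "integrable N g" and h: "integrable N h"
  shows integrable_PiM_component_mult_prod:
      "integrable (\<Pi>\<^sub>M j\<in>I. N) (\<lambda>zs. g (zs i) * (\<Prod>j\<in>I-{i}. h (zs j)))"
    and integral_PiM_component_mult_prod:
      "(\<integral>zs. g (zs i) * (\<Prod>j\<in>I-{i}. h (zs j)) \<partial>(\<Pi>\<^sub>M j\<in>I. N)) = integral\<^sup>L N g * integral\<^sup>L N h ^ (card I - 1)"
proof -
  interpret product_prob_space "\<lambda>_. N" I by (rule product_prob_spaceI) (rule N)
  let ?H = "\<lambda>j. if j = i then g else h"
  have intH: "\<And>j. j \<in> I \<Longrightarrow> integrable N (?H j)" using g h by auto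
  have eq: "(\<Prod>j\<in>I. ?H j (zs j)) = g (zs i) * (\<Prod>j\<in>I-{i}. h (zs j))" for zs
  proof -
    have "(\<Prod>j\<in>I-{i}. ?H j (zs j)) = (\<Prod>j\<in>I-{i}. h (zs j))" by (intro prod.cong) auto
    then show ?thesis using prod.remove[OF I, of "\<lambda>j. ?H j (zs j)"] by simp
  qed
  show "integrable (\<Pi>\<^sub>M j\<in>I. N) (\<lambda>zs. g (zs i) * (\<Prod>j\<in>I-{i}. h (zs j)))"
    using product_integrable_prod[where f = ?H, OF I(1) intH] unfolding eq .
  have "(\<Prod>j\<in>I-{i}. integral\<^sup>L N (?H j)) = (\<Prod>j\<in>I-{i}. integral\<^sup>L N h)" by (intro prod.cong) auto
  then have "(\<Prod>j\<in>I. integral\<^sup>L N (?H j)) = integral\<^sup>L N g * integral\<^sup>L N h ^ (card I - 1)"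
    using prod.remove[OF I, of "\<lambda>j. integral\<^sup>L N (?H j)"] I by simp
  then show "(\<integral>zs. g (zs i) * (\<Prod>j\<in>I-{i}. h (zs j)) \<partial>(\<Pi>\<^sub>M j\<in>I. N)) = integral\<^sup>L N g * integral\<^sup>L N h ^ (card I - 1)"
    using product_integral_prod[where f = ?H, OF I(1) intH] unfolding eq by simp
qed

section \<open>Importance weights and tilted moments\<close>

locale isir =
  fixes M :: "'a measure" and p q f :: "'a \<Rightarrow> real"
  assumes p_measurable[measurable]: "p \<in> borel_measurable M"
    and q_measurable[measurable]: "q \<in> borel_measurable M"
    and p_nonneg: "\<forall>x\<in>space M. 0 \<le> p x" and q_nonneg: "\<forall>x\<in>space M. 0 \<le> q x"
    and p_normalized: "(\<integral>\<^sup>+x. ennreal (p x) \<partial>M) = 1" and q_normalized: "(\<integral>\<^sup>+x. ennreal (q x) \<partial>M) = 1"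
    and q_pos: "\<forall>x\<in>space M. p x > 0 \<longrightarrow> q x > 0"
    and f_measurable[measurable]: "f \<in> borel_measurable M"
    and f_square_integrable: "integrable (density M (\<lambda>x. ennreal (p x))) (\<lambda>x. (f x)\<^sup>2)"
begin

abbreviation "P \<equiv> density M (\<lambda>x. ennreal (p x))"
abbreviation "Q \<equiv> density M (\<lambda>x. ennreal (q x))"
abbreviation "w \<equiv> isw p q"

lemma w_measurable[measurable]: "w \<in> borel_measurable M"
  unfolding isw_def by measurable

lemma w_nonneg: "x \<in> space M \<Longrightarrow> 0 \<le> w x"
  using p_nonneg q_nonneg unfolding isw_def by auto

lemma w_pos: "x \<in> space M \<Longrightarrow> p x > 0 \<Longrightarrow> w x > 0"
  using p_nonneg q_nonneg q_pos unfolding isw_def by auto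

lemma q_mult_w: "x \<in> space M \<Longrightarrow> q x * w x = p x"
  using p_nonneg q_nonneg q_pos unfolding isw_def by force

lemma prob_space_P: "prob_space P"
  by (rule prob_spaceI) (simp add: emeasure_density p_normalized)

lemma prob_space_Q: "prob_space Q"
  by (rule prob_spaceI) (simp add: emeasure_density q_normalized)

lemma sets_P[measurable_cong]: "sets P = sets M" and sets_Q[measurable_cong]: "sets Q = sets M"
  by simp_all

lemma measure_P_space[simp]: "measure P (space M) = 1"
  using prob_space.prob_space[OF prob_space_P] by simp

lemma measure_Q_space[simp]: "measure Q (space M) = 1"
  using prob_space.prob_space[OF prob_space_Q] by simp

lemma integrable_P_const[simp]: "integrable P (\<lambda>_. c)"
  and integrable_Q_const[simp]: "integrable Q (\<lambda>_. c)"
  using finite_measure.integrable_const prob_space.finite_measure prob_space_P prob_space_Q by blast+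

lemma AE_P_p_pos: "AE x in P. p x > 0"
  by (subst AE_density) auto

lemma
  assumes [measurable]: "h \<in> borel_measurable M"
  shows integrable_Q_w_mult: "integrable Q (\<lambda>x. w x * h x) \<longleftrightarrow> integrable P h"
    and integral_Q_w_mult: "(\<integral>x. w x * h x \<partial>Q) = integral\<^sup>L P h"
proof -
  have eq: "AE x in M. q x * (w x * h x) = p x * h x"
    by (intro AE_I2) (simp add: q_mult_w mult.assoc[symmetric])
  have "integrable Q (\<lambda>x. w x * h x) \<longleftrightarrow> integrable M (\<lambda>x. q x * (w x * h x))"
    using q_nonneg by (subst integrable_density) auto
  also have "\<dots> \<longleftrightarrow> integrable M (\<lambda>x. p x * h x)" by (rule integrable_cong_AE[OF _ _ eq]) measurable
  also have "\<dots> \<longleftrightarrow> integrable P h" using p_nonneg by (subst integrable_density) auto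
  finally show "integrable Q (\<lambda>x. w x * h x) \<longleftrightarrow> integrable P h" .
  have "(\<integral>x. w x * h x \<partial>Q) = (\<integral>x. q x * (w x * h x) \<partial>M)"
    using q_nonneg by (subst integral_density) auto
  also have "\<dots> = (\<integral>x. p x * h x \<partial>M)" by (rule integral_cong_AE[OF _ _ eq]) measurable
  also have "\<dots> = integral\<^sup>L P h" using p_nonneg by (subst integral_density) auto
  finally show "(\<integral>x. w x * h x \<partial>Q) = integral\<^sup>L P h" .
qed

lemma integrable_P_f: "integrable P f"
proof (rule Bochner_Integration.integrable_bound)
  interpret prob_space P by (rule prob_space_P)
  show "integrable P (\<lambda>x. 1 + (f x)\<^sup>2)" using f_square_integrable by auto
  have "\<bar>y\<bar> \<le> 1 + y\<^sup>2" for y :: real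
  proof -
    have "0 \<le> (\<bar>y\<bar> - 1)\<^sup>2" by simp
    then have "2 * \<bar>y\<bar> \<le> y\<^sup>2 + 1" by (simp add: power2_eq_square algebra_simps)
    then show ?thesis using zero_le_power2[of y] by linarith
  qed
  then show "AE x in P. norm (f x) \<le> norm (1 + (f x)\<^sup>2)" by auto
qed simp

lemma integrable_P_sq_diff: "integrable P (\<lambda>x. (f x - c)\<^sup>2)"
proof -
  interpret prob_space P by (rule prob_space_P)
  have "integrable P (\<lambda>x. (f x)\<^sup>2 - 2 * c * f x + c\<^sup>2)"
    using f_square_integrable integrable_P_f by auto
  then show ?thesis by (simp add: power2_eq_square algebra_simps)
qed

lemma integrable_mult_exp_neg_w:
  assumes "integrable N h" "sets N = sets M" and "t \<ge> 0"
  shows "integrable N (\<lambda>x. h x * exp (- (t * w x)))"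
proof (rule Bochner_Integration.integrable_bound)
  have [measurable_cong]: "sets N = sets M" and sp: "space N = space M"
    using assms(2) sets_eq_imp_space_eq by auto
  have [measurable]: "h \<in> borel_measurable N" using assms(1) by auto
  show "(\<lambda>x. h x * exp (- (t * w x))) \<in> borel_measurable N" by measurable
  show "AE x in N. norm (h x * exp (- (t * w x))) \<le> norm (h x)"
    using w_nonneg assms(3) sp by (intro AE_I2) (auto simp: abs_mult mult_left_le)
qed (rule assms(1))

definition laplace :: "real \<Rightarrow> real" where
  "laplace t = (\<integral>x. exp (- (t * w x)) \<partial>Q)"

definition tilt :: "real \<Rightarrow> ('a \<Rightarrow> real) \<Rightarrow> real" where
  "tilt t h = (\<integral>x. h x * exp (- (t * w x)) \<partial>P)"

definition tilted_var :: "real \<Rightarrow> real" where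
  "tilted_var t = tilt t (\<lambda>x. (f x)\<^sup>2) - (tilt t f)\<^sup>2 / tilt t (\<lambda>_. 1)"

definition f_variance :: real where
  "f_variance = (\<integral>x. (f x - pi_mean M p f)\<^sup>2 \<partial>P)"

lemma borel_measurable_laplace[measurable]: "laplace \<in> borel_measurable borel"
  unfolding laplace_def[abs_def]
  by (rule sigma_finite_measure.borel_measurable_lebesgue_integral
      [OF prob_space_imp_sigma_finite[OF prob_space_Q]]) measurable

lemma borel_measurable_tilt[measurable]:
  assumes [measurable]: "h \<in> borel_measurable M"
  shows "(\<lambda>t. tilt t h) \<in> borel_measurable borel"
  unfolding tilt_def
  by (rule sigma_finite_measure.borel_measurable_lebesgue_integral
      [OF prob_space_imp_sigma_finite[OF prob_space_P]]) measurable

lemma borel_measurable_tilted_var[measurable]: "tilted_var \<in> borel_measurable borel"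
  unfolding tilted_var_def[abs_def] by measurable

lemma integrable_Q_exp_neg_w: "t \<ge> 0 \<Longrightarrow> integrable Q (\<lambda>x. exp (- (t * w x)))"
  using integrable_mult_exp_neg_w[OF integrable_Q_const[of 1] sets_Q] by simp

lemma integrable_P_exp_neg_w: "t \<ge> 0 \<Longrightarrow> integrable P (\<lambda>x. exp (- (t * w x)))"
  using integrable_mult_exp_neg_w[OF integrable_P_const[of 1] sets_P] by simp

lemma tilt_sq_diff:
  assumes "t \<ge> 0"
  shows "tilt t (\<lambda>x. (f x - c)\<^sup>2) = tilt t (\<lambda>x. (f x)\<^sup>2) - 2 * c * tilt t f + c\<^sup>2 * tilt t (\<lambda>_. 1)"
proof -
  have "tilt t (\<lambda>x. (f x - c)\<^sup>2) = (\<integral>x. (f x)\<^sup>2 * exp (- (t * w x)) - 2 * c * (f x * exp (- (t * w x)))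
      + c\<^sup>2 * exp (- (t * w x)) \<partial>P)"
    unfolding tilt_def by (rule Bochner_Integration.integral_cong) (auto simp: power2_eq_square algebra_simps)
  also have "\<dots> = tilt t (\<lambda>x. (f x)\<^sup>2) - 2 * c * tilt t f + c\<^sup>2 * tilt t (\<lambda>_. 1)"
    using assms f_square_integrable integrable_P_f integrable_P_exp_neg_w
    by (simp add: tilt_def integrable_mult_exp_neg_w)
  finally show ?thesis .
qed

lemma tilt_one_pos: "t \<ge> 0 \<Longrightarrow> tilt t (\<lambda>_. 1) > 0"
proof -
  assume t: "t \<ge> 0"
  interpret prob_space P by (rule prob_space_P)
  have "tilt t (\<lambda>_. 1) \<noteq> 0"
  proof
    assume "tilt t (\<lambda>_. 1) = 0"
    then have "AE x in P. exp (- (t * w x)) = 0"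
      unfolding tilt_def using integrable_P_exp_neg_w[OF t] by (subst (asm) integral_nonneg_eq_0_iff_AE) auto
    then show False by simp
  qed
  moreover have "tilt t (\<lambda>_. 1) \<ge> 0" unfolding tilt_def by (rule integral_nonneg_AE) auto
  ultimately show ?thesis by simp
qed

lemma tilted_var_le: "t \<ge> 0 \<Longrightarrow> tilted_var t \<le> tilt t (\<lambda>x. (f x - c)\<^sup>2)"
  and tilted_var_eq: "t \<ge> 0 \<Longrightarrow> tilted_var t = tilt t (\<lambda>x. (f x - tilt t f / tilt t (\<lambda>_. 1))\<^sup>2)"
proof -
  assume t: "t \<ge> 0"
  have C: "tilt t (\<lambda>_. 1) > 0" by (rule tilt_one_pos[OF t])
  have "tilt t (\<lambda>x. (f x - c)\<^sup>2) - tilted_var t = (c * tilt t (\<lambda>_. 1) - tilt t f)\<^sup>2 / tilt t (\<lambda>_. 1)"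
    using C unfolding tilt_sq_diff[OF t] tilted_var_def by (simp add: field_simps power2_eq_square)
  moreover have "0 \<le> (c * tilt t (\<lambda>_. 1) - tilt t f)\<^sup>2 / tilt t (\<lambda>_. 1)" using C by simp
  ultimately show "tilted_var t \<le> tilt t (\<lambda>x. (f x - c)\<^sup>2)" by linarith
  show "tilted_var t = tilt t (\<lambda>x. (f x - tilt t f / tilt t (\<lambda>_. 1))\<^sup>2)"
    using C unfolding tilt_sq_diff[OF t] tilted_var_def by (simp add: field_simps power2_eq_square)
qed

lemma tilt_sq_diff_nonneg: "0 \<le> tilt t (\<lambda>x. (f x - c)\<^sup>2)"
  unfolding tilt_def by (rule integral_nonneg_AE) auto

lemma tilted_var_nonneg: "t \<ge> 0 \<Longrightarrow> 0 \<le> tilted_var t"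
  using tilted_var_eq tilt_sq_diff_nonneg by simp

lemma tilt_sq_diff_antimono:
  assumes "0 \<le> s" "s \<le> t"
  shows "tilt t (\<lambda>x. (f x - c)\<^sup>2) \<le> tilt s (\<lambda>x. (f x - c)\<^sup>2)"
  unfolding tilt_def
proof (rule integral_mono_AE')
  show "integrable P (\<lambda>x. (f x - c)\<^sup>2 * exp (- (s * w x)))"
    using assms integrable_P_sq_diff by (intro integrable_mult_exp_neg_w) auto
  have "s * w x \<le> t * w x" if "x \<in> space M" for x
    using w_nonneg[OF that] assms by (simp add: mult_right_mono)
  then show "AE x in P. (f x - c)\<^sup>2 * exp (- (t * w x)) \<le> (f x - c)\<^sup>2 * exp (- (s * w x))"
    by (intro AE_I2 mult_left_mono) auto
qed auto

lemma tilted_var_antimono: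
  assumes "0 \<le> s" "s \<le> t"
  shows "tilted_var t \<le> tilted_var s"
proof -
  have "tilted_var t \<le> tilt t (\<lambda>x. (f x - tilt s f / tilt s (\<lambda>_. 1))\<^sup>2)"
    using assms by (intro tilted_var_le) auto
  also have "\<dots> \<le> tilt s (\<lambda>x. (f x - tilt s f / tilt s (\<lambda>_. 1))\<^sup>2)"
    by (rule tilt_sq_diff_antimono[OF assms])
  also have "\<dots> = tilted_var s" using tilted_var_eq assms by simp
  finally show ?thesis .
qed

lemma tilted_var_0: "tilted_var 0 = f_variance"
proof -
  interpret prob_space P by (rule prob_space_P)
  show ?thesis
    using tilted_var_eq[of 0] by (simp add: tilt_def f_variance_def pi_mean_def)
qed

lemma f_variance_nonneg: "0 \<le> f_variance"
  using tilted_var_nonneg[of 0] tilted_var_0 by simp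

lemma tilted_var_le_f_variance: "t \<ge> 0 \<Longrightarrow> tilted_var t \<le> f_variance"
  using tilted_var_antimono[of 0 t] tilted_var_0 by simp

text \<open>If the tilted variance vanished at \<open>t = 1\<close>, then \<open>f\<close> would be \<open>P\<close>-a.e. constant, since the
  tilting weight is positive.\<close>
lemma tilted_var_1_pos:
  assumes "f_variance > 0" shows "tilted_var 1 > 0"
proof (rule ccontr)
  assume "\<not> tilted_var 1 > 0"
  then have "tilted_var 1 = 0" using tilted_var_nonneg[of 1] by simp
  define c where "c = tilt 1 f / tilt 1 (\<lambda>_. 1)"
  have "tilt 1 (\<lambda>x. (f x - c)\<^sup>2) = 0" using \<open>tilted_var 1 = 0\<close> tilted_var_eq[of 1] unfolding c_def by simp
  then have "AE x in P. (f x - c)\<^sup>2 * exp (- (1 * w x)) = 0"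
    unfolding tilt_def using integrable_mult_exp_neg_w[OF integrable_P_sq_diff, of 1]
    by (subst (asm) integral_nonneg_eq_0_iff_AE) auto
  then have "AE x in P. (f x - c)\<^sup>2 = 0" by eventually_elim simp
  then have "tilt 0 (\<lambda>x. (f x - c)\<^sup>2) = 0" unfolding tilt_def by (simp add: integral_eq_zero_AE)
  then show False using tilted_var_le[of 0 c] tilted_var_0 assms by simp
qed

lemma tilted_var_eventually_le:
  assumes "y > 0" shows "\<exists>t\<ge>0. tilted_var t \<le> y"
proof -
  have "(\<lambda>n. \<integral>x. (f x)\<^sup>2 * exp (- (real n * w x)) \<partial>P) \<longlonglongrightarrow> (\<integral>x. 0 \<partial>P)"
  proof (rule integral_dominated_convergence)
    show "AE x in P. (\<lambda>n. (f x)\<^sup>2 * exp (- (real n * w x))) \<longlonglongrightarrow> 0"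
      using AE_space AE_P_p_pos
    proof eventually_elim
      case (elim x)
      then have "w x > 0" using w_pos by simp
      then have "(\<lambda>n. exp (- w x) ^ n) \<longlonglongrightarrow> 0" by (intro LIMSEQ_power_zero) simp
      then have "(\<lambda>n. exp (- (real n * w x))) \<longlonglongrightarrow> 0"
        by (simp add: exp_of_nat_mult[symmetric])
      then show ?case by (rule tendsto_mult_right_zero)
    qed
    show "AE x in P. norm ((f x)\<^sup>2 * exp (- (real n * w x))) \<le> (f x)\<^sup>2" for n
      using w_nonneg by (intro AE_I2) (simp add: abs_mult mult_left_le)
  qed (use f_square_integrable in simp_all)
  from LIMSEQ_D[OF this[simplified] assms] obtain n
    where "(\<integral>x. (f x)\<^sup>2 * exp (- (real n * w x)) \<partial>P) < y" by fastforce
  then have "tilt (real n) (\<lambda>x. (f x - 0)\<^sup>2) < y" by (simp add: tilt_def)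
  then show ?thesis using tilted_var_le[of "real n" 0] by (intro exI[of _ "real n"]) auto
qed

lemma laplace_pos: "t \<ge> 0 \<Longrightarrow> laplace t > 0"
proof -
  assume t: "t \<ge> 0"
  interpret prob_space Q by (rule prob_space_Q)
  have "laplace t \<noteq> 0"
  proof
    assume "laplace t = 0"
    then have "AE x in Q. exp (- (t * w x)) = 0"
      unfolding laplace_def using integrable_Q_exp_neg_w[OF t]
      by (subst (asm) integral_nonneg_eq_0_iff_AE) auto
    then show False by simp
  qed
  moreover have "laplace t \<ge> 0" unfolding laplace_def by (rule integral_nonneg_AE) auto
  ultimately show ?thesis by simp
qed

lemma laplace_le_1: "t \<ge> 0 \<Longrightarrow> laplace t \<le> 1"
proof -
  assume t: "t \<ge> 0"
  interpret prob_space Q by (rule prob_space_Q)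
  have "laplace t \<le> (\<integral>x. 1 \<partial>Q)" unfolding laplace_def
    by (rule integral_mono_AE') (use t w_nonneg in auto)
  then show ?thesis by simp
qed

lemma laplace_0: "laplace 0 = 1"
  using prob_space.prob_space[OF prob_space_Q] by (simp add: laplace_def)

text \<open>Since \<open>w\<close> has \<open>Q\<close>-mean 1, it is not \<open>Q\<close>-a.e. zero.\<close>
lemma laplace_less_1: "t > 0 \<Longrightarrow> laplace t < 1"
proof (rule ccontr)
  assume t: "t > 0" and "\<not> laplace t < 1"
  interpret prob_space Q by (rule prob_space_Q)
  have "(\<integral>x. 1 - exp (- (t * w x)) \<partial>Q) = 0"
    using laplace_le_1[of t] \<open>\<not> laplace t < 1\<close> integrable_Q_exp_neg_w[of t] t
    unfolding laplace_def by (simp add: prob_space)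
  then have "AE x in Q. 1 - exp (- (t * w x)) = 0"
    using integrable_Q_exp_neg_w[of t] t w_nonneg by (subst (asm) integral_nonneg_eq_0_iff_AE) auto
  then have "AE x in Q. w x * 1 = 0" by eventually_elim (use t in auto)
  then have "(\<integral>x. w x * 1 \<partial>Q) = 0" by (simp add: integral_eq_zero_AE)
  moreover have "(\<integral>x. w x * 1 \<partial>Q) = 1"
    using integral_Q_w_mult[of "\<lambda>_. 1"] prob_space.prob_space[OF prob_space_P] by simp
  ultimately show False by simp
qed

end

section \<open>The kernel as an integral over Laplace transforms\<close>

context isir
begin

abbreviation "Q_pow I \<equiv> \<Pi>\<^sub>M i\<in>I. Q"

definition wsum :: "nat set \<Rightarrow> (nat \<Rightarrow> 'a) \<Rightarrow> real" where
  "wsum I zs = (\<Sum>j\<in>I. w (zs j))"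

definition snis_estimate :: "nat set \<Rightarrow> 'a \<Rightarrow> (nat \<Rightarrow> 'a) \<Rightarrow> real" where
  "snis_estimate I x zs = (w x * f x + (\<Sum>i\<in>I. w (zs i) * f (zs i))) / (w x + wsum I zs)"

definition snis_error :: "nat set \<Rightarrow> 'a \<Rightarrow> (nat \<Rightarrow> 'a) \<Rightarrow> real" where
  "snis_error I x zs = (\<Sum>i\<in>I. w (zs i) * (f x - f (zs i))) / (w x + wsum I zs)"

lemma PN_eq_integral_snis_estimate:
  assumes "N \<ge> 1"
  shows "PN M p q N f x = (\<integral>zs. snis_estimate {2..N} x zs \<partial>Q_pow {2..N})"
  unfolding PN_def
proof (rule Bochner_Integration.integral_cong[OF refl])
  fix zs :: "nat \<Rightarrow> 'a"
  have "{1..N} = insert 1 {2..N}" using assms by auto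
  then have "(\<Sum>i\<in>{1..N}. g i) = g 1 + (\<Sum>i\<in>{2..N}. g i)" for g :: "nat \<Rightarrow> real" by simp
  then show "(let z = zs(1 := x) in \<Sum>i\<in>{1..N}. w (z i) / (\<Sum>j\<in>{1..N}. w (z j)) * f (z i))
      = snis_estimate {2..N} x zs"
    by (simp add: snis_estimate_def wsum_def Let_def sum_divide_distrib[symmetric])
qed

lemma space_Q_pow_component: "zs \<in> space (Q_pow I) \<Longrightarrow> i \<in> I \<Longrightarrow> zs i \<in> space M"
  by (auto simp: space_PiM PiE_def Pi_def)

lemma wsum_nonneg: "zs \<in> space (Q_pow I) \<Longrightarrow> 0 \<le> wsum I zs"
  unfolding wsum_def by (intro sum_nonneg) (auto intro: w_nonneg space_Q_pow_component)

lemma wsum_eq_0_iff: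
  assumes "finite I" "zs \<in> space (Q_pow I)"
  shows "wsum I zs = 0 \<longleftrightarrow> (\<forall>i\<in>I. w (zs i) = 0)"
  unfolding wsum_def using assms by (subst sum_nonneg_eq_0_iff) (auto intro: w_nonneg space_Q_pow_component)

lemma exp_neg_wsum:
  assumes "finite I"
  shows "exp (- (t * wsum I zs)) = (\<Prod>j\<in>I. exp (- (t * w (zs j))))"
proof -
  have "- (t * wsum I zs) = (\<Sum>j\<in>I. - (t * w (zs j)))" unfolding wsum_def by (simp add: sum_distrib_left sum_negf)
  then show ?thesis using exp_sum[OF assms] by simp
qed

lemma prob_space_Q_pow: "prob_space (Q_pow I)"
  by (rule prob_space_PiM) (rule prob_space_Q)

lemma pair_sigma_finite_P_Q_pow: "pair_sigma_finite P (Q_pow I)"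
  by (intro pair_sigma_finite.intro prob_space_imp_sigma_finite prob_space_P prob_space_Q_pow)

lemma pair_sigma_finite_P_Q_pow_lborel: "pair_sigma_finite (P \<Otimes>\<^sub>M Q_pow I) lborel"
proof -
  interpret pair_prob_space P "Q_pow I"
    by (intro pair_prob_space.intro pair_sigma_finite_P_Q_pow prob_space_P prob_space_Q_pow)
  show ?thesis
    by (intro pair_sigma_finite.intro prob_space_imp_sigma_finite P.prob_space_axioms
        lborel.sigma_finite_measure_axioms)
qed

lemma snis_estimate_eq:
  assumes "x \<in> space M" "w x > 0" and "zs \<in> space (Q_pow I)"
  shows "snis_estimate I x zs = f x - snis_error I x zs"
proof -
  have "w x + wsum I zs > 0" using assms wsum_nonneg by (simp add: add_pos_nonneg)
  moreover have "(\<Sum>i\<in>I. w (zs i) * (f x - f (zs i))) = f x * wsum I zs - (\<Sum>i\<in>I. w (zs i) * f (zs i))"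
    unfolding wsum_def by (simp add: algebra_simps sum_subtractf sum_distrib_left)
  ultimately show ?thesis unfolding snis_estimate_def snis_error_def by (simp add: field_simps)
qed

lemma abs_f_mult_snis_error_le:
  assumes "finite I" and "x \<in> space M" "w x > 0" and "zs \<in> space (Q_pow I)"
  shows "\<bar>f x * snis_error I x zs\<bar> \<le> (\<Sum>i\<in>I. 3/2 * (f x)\<^sup>2 + (f (zs i))\<^sup>2 * w (zs i) / (2 * w x))"
proof -
  let ?S = "w x + wsum I zs"
  have zs: "i \<in> I \<Longrightarrow> zs i \<in> space M" for i using space_Q_pow_component[OF assms(4)] .
  have S: "w x \<le> ?S" "?S > 0" using assms(3) wsum_nonneg[OF assms(4)] by auto
  have wS: "w (zs i) \<le> ?S" if "i \<in> I" for i
  proof -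
    have "w (zs i) \<le> wsum I zs" unfolding wsum_def
      using assms(1) that by (intro member_le_sum) (auto intro: w_nonneg zs)
    then show ?thesis using assms(3) by simp
  qed
  have "\<bar>f x * snis_error I x zs\<bar> = \<bar>\<Sum>i\<in>I. f x * (w (zs i) * (f x - f (zs i))) / ?S\<bar>"
    unfolding snis_error_def by (simp add: sum_distrib_left sum_divide_distrib)
  also have "\<dots> \<le> (\<Sum>i\<in>I. \<bar>f x * (w (zs i) * (f x - f (zs i))) / ?S\<bar>)" by (rule sum_abs)
  also have "\<dots> = (\<Sum>i\<in>I. \<bar>f x\<bar> * w (zs i) * \<bar>f x - f (zs i)\<bar> / ?S)"
    using S by (intro sum.cong) (auto simp: abs_mult w_nonneg zs)
  also have "\<dots> \<le> (\<Sum>i\<in>I. 3/2 * (f x)\<^sup>2 + (f (zs i))\<^sup>2 * w (zs i) / (2 * w x))"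
    using assms(3) S wS by (intro sum_mono abs_mult_abs_diff_div_le) (auto intro: w_nonneg zs)
  finally show ?thesis .
qed

text \<open>Where \<open>w x = 0\<close> the junk value \<open>1 / 0 = 0\<close> is harmless: this happens only off the support of \<open>p\<close>.\<close>
lemma integrable_P_inverse_w: "integrable P (\<lambda>x. 1 / w x)"
proof -
  have q: "integrable M q"
    by (rule integrableI_nonneg) (use q_nonneg q_normalized in auto)
  have "AE x in M. norm (p x * (1 / w x)) \<le> norm (q x)"
    using q_pos by (intro AE_I2) (auto simp: isw_def)
  then have "integrable M (\<lambda>x. p x * (1 / w x))"
    by (intro Bochner_Integration.integrable_bound[OF q]) measurable
  then show ?thesis using p_nonneg by (subst integrable_density) auto
qed

lemma
  assumes I: "finite I" and x: "x \<in> space M" "w x > 0"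
  shows integrable_f_mult_snis_error: "integrable (Q_pow I) (\<lambda>zs. f x * snis_error I x zs)"
    and integral_abs_f_mult_snis_error_le:
      "(\<integral>zs. \<bar>f x * snis_error I x zs\<bar> \<partial>Q_pow I)
         \<le> real (card I) * (3/2 * (f x)\<^sup>2 + (\<integral>z. (f z)\<^sup>2 \<partial>P) / (2 * w x))"
proof -
  interpret Q_pow: prob_space "Q_pow I" by (rule prob_space_Q_pow)
  have int_Q: "integrable Q (\<lambda>z. (f z)\<^sup>2 * w z)" and val_Q: "(\<integral>z. (f z)\<^sup>2 * w z \<partial>Q) = (\<integral>z. (f z)\<^sup>2 \<partial>P)"
    using integrable_Q_w_mult[of "\<lambda>z. (f z)\<^sup>2"] integral_Q_w_mult[of "\<lambda>z. (f z)\<^sup>2"] f_square_integrable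
    by (simp_all add: mult.commute)
  have int1: "integrable (Q_pow I) (\<lambda>zs. (f (zs i))\<^sup>2 * w (zs i))"
    and val1: "(\<integral>zs. (f (zs i))\<^sup>2 * w (zs i) \<partial>Q_pow I) = (\<integral>z. (f z)\<^sup>2 \<partial>P)" if "i \<in> I" for i
    using integrable_PiM_component_mult_prod[OF prob_space_Q I that int_Q, of "\<lambda>_. 1"]
      integral_PiM_component_mult_prod[OF prob_space_Q I that int_Q, of "\<lambda>_. 1"] val_Q
    by (simp_all add: prob_space.prob_space[OF prob_space_Q])
  let ?B = "\<lambda>zs. \<Sum>i\<in>I. 3/2 * (f x)\<^sup>2 + (f (zs i))\<^sup>2 * w (zs i) / (2 * w x)"
  have int_B: "integrable (Q_pow I) ?B" using int1 by auto
  have bound: "AE zs in Q_pow I. \<bar>f x * snis_error I x zs\<bar> \<le> ?B zs"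
    by (intro AE_I2 abs_f_mult_snis_error_le[OF I x])
  show "integrable (Q_pow I) (\<lambda>zs. f x * snis_error I x zs)"
    by (rule Bochner_Integration.integrable_bound[OF int_B]) (use bound in \<open>auto simp: snis_error_def wsum_def\<close>)
  have "(\<integral>zs. \<bar>f x * snis_error I x zs\<bar> \<partial>Q_pow I) \<le> (\<integral>zs. ?B zs \<partial>Q_pow I)"
    using bound by (intro integral_mono_AE' int_B) auto
  also have "\<dots> = real (card I) * (3/2 * (f x)\<^sup>2 + (\<integral>z. (f z)\<^sup>2 \<partial>P) / (2 * w x))"
    using int1 val1 by (simp add: Bochner_Integration.integral_sum Q_pow.prob_space)
  finally show "(\<integral>zs. \<bar>f x * snis_error I x zs\<bar> \<partial>Q_pow I)
      \<le> real (card I) * (3/2 * (f x)\<^sup>2 + (\<integral>z. (f z)\<^sup>2 \<partial>P) / (2 * w x))" .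
qed

lemma integrable_f_mult_snis_error_pair:
  assumes I: "finite I"
  shows "integrable (P \<Otimes>\<^sub>M Q_pow I) (\<lambda>xz. f (fst xz) * snis_error I (fst xz) (snd xz))"
proof -
  interpret pair_sigma_finite P "Q_pow I" by (rule pair_sigma_finite_P_Q_pow)
  let ?F2 = "\<integral>z. (f z)\<^sup>2 \<partial>P"
  have F2: "0 \<le> ?F2" by (rule integral_nonneg_AE) auto
  show ?thesis
  proof (rule Fubini_integrable)
    show "(\<lambda>xz. f (fst xz) * snis_error I (fst xz) (snd xz)) \<in> borel_measurable (P \<Otimes>\<^sub>M Q_pow I)"
      unfolding snis_error_def wsum_def by measurable
    have "integrable P (\<lambda>x. real (card I) * (3/2 * (f x)\<^sup>2 + ?F2 / 2 * (1 / w x)))"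
      using f_square_integrable integrable_P_inverse_w
      by (intro integrable_mult_right Bochner_Integration.integrable_add) auto
    then show "integrable P (\<lambda>x. \<integral>zs. norm (f (fst (x, zs)) * snis_error I (fst (x, zs)) (snd (x, zs))) \<partial>Q_pow I)"
    proof (rule Bochner_Integration.integrable_bound)
      show "AE x in P. norm (\<integral>zs. norm (f (fst (x, zs)) * snis_error I (fst (x, zs)) (snd (x, zs))) \<partial>Q_pow I)
          \<le> norm (real (card I) * (3/2 * (f x)\<^sup>2 + ?F2 / 2 * (1 / w x)))"
        using AE_space AE_P_p_pos
      proof eventually_elim
        case (elim x)
        then have x: "x \<in> space M" "w x > 0" using w_pos by auto
        have "0 \<le> (\<integral>zs. \<bar>f x * snis_error I x zs\<bar> \<partial>Q_pow I)" by (rule integral_nonneg_AE) auto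
        then show ?case using integral_abs_f_mult_snis_error_le[OF I x] F2 x by simp
      qed
    qed (unfold snis_error_def wsum_def, measurable)
    show "AE x in P. integrable (Q_pow I) (\<lambda>zs. f (fst (x, zs)) * snis_error I (fst (x, zs)) (snd (x, zs)))"
      using AE_space AE_P_p_pos by eventually_elim (use integrable_f_mult_snis_error[OF I] w_pos in auto)
  qed
qed

text \<open>Substituting \<open>1 / s = \<integral>\<^sub>0\<^sup>\<infinity> exp (- t s) dt\<close> for the normalising sum \<open>s\<close> turns the
  self-normalised error into a \<open>t\<close>-integral of sums of products of functions of single particles.\<close>
definition error_integrand :: "nat set \<Rightarrow> 'a \<times> (nat \<Rightarrow> 'a) \<Rightarrow> real \<Rightarrow> real" where
  "error_integrand I xz t =
     f (fst xz) * (\<Sum>i\<in>I. w (snd xz i) * (f (fst xz) - f (snd xz i)))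
     * (indicator {0..} t * exp (- (t * (w (fst xz) + wsum I (snd xz)))))"

lemma
  assumes I: "finite I" and x: "x \<in> space M" and zs: "zs \<in> space (Q_pow I)"
  shows integrable_error_integrand: "integrable lborel (error_integrand I (x, zs))"
    and integral_error_integrand: "(\<integral>t. error_integrand I (x, zs) t \<partial>lborel) = f x * snis_error I x zs"
    and integral_norm_error_integrand:
      "(\<integral>t. norm (error_integrand I (x, zs) t) \<partial>lborel) = \<bar>f x * snis_error I x zs\<bar>"
proof -
  let ?S = "w x + wsum I zs"
  let ?c = "f x * (\<Sum>i\<in>I. w (zs i) * (f x - f (zs i)))"
  have S: "?S \<ge> 0" using w_nonneg[OF x] wsum_nonneg[OF zs] by simp
  have c: "?c = 0" if "?S = 0"
  proof -
    have "w x = 0" "wsum I zs = 0" using that w_nonneg[OF x] wsum_nonneg[OF zs] by auto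
    then show ?thesis using wsum_eq_0_iff[OF I zs] by simp
  qed
  have "f x * snis_error I x zs = ?c / ?S" by (simp add: snis_error_def)
  moreover have "error_integrand I (x, zs) = (\<lambda>t. ?c * (indicator {0..} t * exp (- (t * ?S))))"
    by (simp add: error_integrand_def fun_eq_iff)
  ultimately show "integrable lborel (error_integrand I (x, zs))"
    and "(\<integral>t. error_integrand I (x, zs) t \<partial>lborel) = f x * snis_error I x zs"
    and "(\<integral>t. norm (error_integrand I (x, zs) t) \<partial>lborel) = \<bar>f x * snis_error I x zs\<bar>"
    using integrable_mult_exp_neg_Ici[OF S c] integral_mult_exp_neg_Ici[OF S c]
      integral_norm_mult_exp_neg_Ici[OF S c] by (simp_all add: abs_of_nonneg[OF S])
qed

lemma integrable_error_integrand_pair: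
  assumes I: "finite I"
  shows "integrable ((P \<Otimes>\<^sub>M Q_pow I) \<Otimes>\<^sub>M lborel) (\<lambda>z. error_integrand I (fst z) (snd z))"
proof -
  interpret pair_sigma_finite "P \<Otimes>\<^sub>M Q_pow I" lborel by (rule pair_sigma_finite_P_Q_pow_lborel)
  have space: "fst xz \<in> space M" "snd xz \<in> space (Q_pow I)" if "xz \<in> space (P \<Otimes>\<^sub>M Q_pow I)" for xz
    using that by (auto simp: space_pair_measure)
  show ?thesis
  proof (rule Fubini_integrable)
    show "(\<lambda>z. error_integrand I (fst z) (snd z)) \<in> borel_measurable ((P \<Otimes>\<^sub>M Q_pow I) \<Otimes>\<^sub>M lborel)"
      unfolding error_integrand_def wsum_def by measurable
    show "integrable (P \<Otimes>\<^sub>M Q_pow I) (\<lambda>xz. \<integral>t. norm (error_integrand I (fst (xz, t)) (snd (xz, t))) \<partial>lborel)"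
      using integrable_abs[OF integrable_f_mult_snis_error_pair[OF I]]
    proof (rule Bochner_Integration.integrable_cong[OF refl, THEN iffD1, rotated])
      fix xz assume "xz \<in> space (P \<Otimes>\<^sub>M Q_pow I)"
      then show "\<bar>f (fst xz) * snis_error I (fst xz) (snd xz)\<bar>
          = (\<integral>t. norm (error_integrand I (fst (xz, t)) (snd (xz, t))) \<partial>lborel)"
        using integral_norm_error_integrand[OF I, of "fst xz" "snd xz"] space by simp
    qed
    show "AE xz in P \<Otimes>\<^sub>M Q_pow I. integrable lborel (\<lambda>t. error_integrand I (fst (xz, t)) (snd (xz, t)))"
    proof (rule AE_I2)
      fix xz assume "xz \<in> space (P \<Otimes>\<^sub>M Q_pow I)"
      then show "integrable lborel (\<lambda>t. error_integrand I (fst (xz, t)) (snd (xz, t)))"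
        using integrable_error_integrand[OF I, of "fst xz" "snd xz"] space by simp
    qed
  qed
qed

lemma error_integrand_eq_sum:
  assumes I: "finite I" and t: "t \<ge> 0"
  shows "error_integrand I (x, zs) t = (\<Sum>i\<in>I.
      ((f x)\<^sup>2 * exp (- (t * w x))) * ((w (zs i) * exp (- (t * w (zs i)))) * (\<Prod>j\<in>I-{i}. exp (- (t * w (zs j)))))
    - (f x * exp (- (t * w x))) * ((w (zs i) * (f (zs i) * exp (- (t * w (zs i))))) * (\<Prod>j\<in>I-{i}. exp (- (t * w (zs j))))))"
proof -
  have "exp (- (t * (w x + wsum I zs))) = exp (- (t * w x) + - (t * wsum I zs))"
    by (simp add: algebra_simps)
  also have "\<dots> = exp (- (t * w x)) * (\<Prod>j\<in>I. exp (- (t * w (zs j))))"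
    unfolding exp_add exp_neg_wsum[OF I] ..
  finally have "error_integrand I (x, zs) t
      = (\<Sum>i\<in>I. f x * (w (zs i) * (f x - f (zs i))) * (exp (- (t * w x)) * (\<Prod>j\<in>I. exp (- (t * w (zs j))))))"
    unfolding error_integrand_def using t by (simp add: sum_distrib_left sum_distrib_right)
  also have "\<dots> = (\<Sum>i\<in>I.
      ((f x)\<^sup>2 * exp (- (t * w x))) * ((w (zs i) * exp (- (t * w (zs i)))) * (\<Prod>j\<in>I-{i}. exp (- (t * w (zs j)))))
    - (f x * exp (- (t * w x))) * ((w (zs i) * (f (zs i) * exp (- (t * w (zs i))))) * (\<Prod>j\<in>I-{i}. exp (- (t * w (zs j))))))"
    using I by (intro sum.cong refl) (simp add: prod.remove power2_eq_square algebra_simps)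
  finally show ?thesis .
qed

lemma
  assumes I: "finite I" "i \<in> I" and t: "t \<ge> 0" and h: "integrable P h"
  shows integrable_Q_pow_tilted_component: "integrable (Q_pow I)
      (\<lambda>zs. w (zs i) * (h (zs i) * exp (- (t * w (zs i)))) * (\<Prod>j\<in>I-{i}. exp (- (t * w (zs j)))))"
    and integral_Q_pow_tilted_component: "(\<integral>zs. w (zs i) * (h (zs i) * exp (- (t * w (zs i))))
      * (\<Prod>j\<in>I-{i}. exp (- (t * w (zs j)))) \<partial>Q_pow I) = tilt t h * laplace t ^ (card I - 1)"
proof -
  have [measurable]: "h \<in> borel_measurable M" using borel_measurable_integrable[OF h] by simp
  have "integrable P (\<lambda>z. h z * exp (- (t * w z)))" by (rule integrable_mult_exp_neg_w[OF h sets_P t])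
  then have int: "integrable Q (\<lambda>z. w z * (h z * exp (- (t * w z))))"
    and val: "(\<integral>z. w z * (h z * exp (- (t * w z))) \<partial>Q) = tilt t h"
    by (simp_all add: integrable_Q_w_mult integral_Q_w_mult tilt_def)
  show "integrable (Q_pow I)
      (\<lambda>zs. w (zs i) * (h (zs i) * exp (- (t * w (zs i)))) * (\<Prod>j\<in>I-{i}. exp (- (t * w (zs j)))))"
    by (rule integrable_PiM_component_mult_prod[OF prob_space_Q I int integrable_Q_exp_neg_w[OF t]])
  show "(\<integral>zs. w (zs i) * (h (zs i) * exp (- (t * w (zs i))))
      * (\<Prod>j\<in>I-{i}. exp (- (t * w (zs j)))) \<partial>Q_pow I) = tilt t h * laplace t ^ (card I - 1)"
    using integral_PiM_component_mult_prod[OF prob_space_Q I int integrable_Q_exp_neg_w[OF t]]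
    by (simp add: val laplace_def)
qed

lemma integral_error_integrand_pair:
  assumes I: "finite I" and t: "t \<ge> 0"
  shows "(\<integral>xz. error_integrand I xz t \<partial>(P \<Otimes>\<^sub>M Q_pow I))
    = real (card I) * (tilt t (\<lambda>x. (f x)\<^sup>2) * tilt t (\<lambda>_. 1) - (tilt t f)\<^sup>2) * laplace t ^ (card I - 1)"
proof -
  interpret pair_sigma_finite P "Q_pow I" by (rule pair_sigma_finite_P_Q_pow)
  let ?e = "\<lambda>z. exp (- (t * w z))"
  let ?k1 = "\<lambda>i zs. w (zs i) * ?e (zs i) * (\<Prod>j\<in>I-{i}. ?e (zs j))"
  let ?k2 = "\<lambda>i zs. w (zs i) * (f (zs i) * ?e (zs i)) * (\<Prod>j\<in>I-{i}. ?e (zs j))"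
  have int_a1: "integrable P (\<lambda>x. (f x)\<^sup>2 * ?e x)" and int_a2: "integrable P (\<lambda>x. f x * ?e x)"
    using integrable_mult_exp_neg_w[OF f_square_integrable sets_P t]
      integrable_mult_exp_neg_w[OF integrable_P_f sets_P t] by auto
  note k1 = integrable_Q_pow_tilted_component[OF I _ t integrable_P_const[of 1], unfolded mult_1]
    integral_Q_pow_tilted_component[OF I _ t integrable_P_const[of 1], unfolded mult_1]
  note k2 = integrable_Q_pow_tilted_component[OF I _ t integrable_P_f]
    integral_Q_pow_tilted_component[OF I _ t integrable_P_f]
  have "(\<integral>xz. error_integrand I xz t \<partial>(P \<Otimes>\<^sub>M Q_pow I))
      = (\<integral>z. (\<Sum>i\<in>I. (f (fst z))\<^sup>2 * ?e (fst z) * ?k1 i (snd z) - f (fst z) * ?e (fst z) * ?k2 i (snd z))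
          \<partial>(P \<Otimes>\<^sub>M Q_pow I))"
    using error_integrand_eq_sum[OF I t] by (intro Bochner_Integration.integral_cong refl) (metis prod.collapse)
  also have "\<dots> = (\<Sum>i\<in>I. tilt t (\<lambda>x. (f x)\<^sup>2) * (tilt t (\<lambda>_. 1) * laplace t ^ (card I - 1))
      - tilt t f * (tilt t f * laplace t ^ (card I - 1)))"
    using integrable_mult_fst_snd[OF int_a1 k1(1)] integral_mult_fst_snd[OF int_a1 k1(1)] k1(2)
      integrable_mult_fst_snd[OF int_a2 k2(1)] integral_mult_fst_snd[OF int_a2 k2(1)] k2(2)
    by (subst Bochner_Integration.integral_sum) (auto intro!: sum.cong simp: tilt_def)
  also have "\<dots> = real (card I) * (tilt t (\<lambda>x. (f x)\<^sup>2) * tilt t (\<lambda>_. 1) - (tilt t f)\<^sup>2) * laplace t ^ (card I - 1)"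
    by (simp add: power2_eq_square algebra_simps)
  finally show ?thesis .
qed

lemma
  assumes I: "finite I"
  shows integrable_error_kernel: "integrable lborel (\<lambda>t. indicator {0..} t
      * (real (card I) * (tilt t (\<lambda>x. (f x)\<^sup>2) * tilt t (\<lambda>_. 1) - (tilt t f)\<^sup>2) * laplace t ^ (card I - 1)))"
    and integral_f_mult_snis_error_pair:
      "(\<integral>xz. f (fst xz) * snis_error I (fst xz) (snd xz) \<partial>(P \<Otimes>\<^sub>M Q_pow I))
       = (\<integral>t. indicator {0..} t
           * (real (card I) * (tilt t (\<lambda>x. (f x)\<^sup>2) * tilt t (\<lambda>_. 1) - (tilt t f)\<^sup>2) * laplace t ^ (card I - 1))
          \<partial>lborel)"
proof -
  interpret pair_sigma_finite "P \<Otimes>\<^sub>M Q_pow I" lborel by (rule pair_sigma_finite_P_Q_pow_lborel)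
  have int: "integrable ((P \<Otimes>\<^sub>M Q_pow I) \<Otimes>\<^sub>M lborel) (case_prod (error_integrand I))"
    using integrable_error_integrand_pair[OF I] by (simp add: split_beta')
  have inner: "(\<integral>xz. error_integrand I xz t \<partial>(P \<Otimes>\<^sub>M Q_pow I)) = indicator {0..} t
      * (real (card I) * (tilt t (\<lambda>x. (f x)\<^sup>2) * tilt t (\<lambda>_. 1) - (tilt t f)\<^sup>2) * laplace t ^ (card I - 1))" for t
    using integral_error_integrand_pair[OF I, of t] by (cases "t \<ge> 0") (simp_all add: error_integrand_def)
  show "integrable lborel (\<lambda>t. indicator {0..} t
      * (real (card I) * (tilt t (\<lambda>x. (f x)\<^sup>2) * tilt t (\<lambda>_. 1) - (tilt t f)\<^sup>2) * laplace t ^ (card I - 1)))"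
    using integrable_snd[OF int] unfolding inner .
  have "(\<integral>xz. f (fst xz) * snis_error I (fst xz) (snd xz) \<partial>(P \<Otimes>\<^sub>M Q_pow I))
      = (\<integral>xz. (\<integral>t. error_integrand I xz t \<partial>lborel) \<partial>(P \<Otimes>\<^sub>M Q_pow I))"
    using integral_error_integrand[OF I]
    by (intro Bochner_Integration.integral_cong refl) (auto simp: space_pair_measure)
  also have "\<dots> = (\<integral>t. (\<integral>xz. error_integrand I xz t \<partial>(P \<Otimes>\<^sub>M Q_pow I)) \<partial>lborel)"
    using integral_fst'[OF int] integral_snd[OF int] by simp
  finally show "(\<integral>xz. f (fst xz) * snis_error I (fst xz) (snd xz) \<partial>(P \<Otimes>\<^sub>M Q_pow I))
       = (\<integral>t. indicator {0..} t
           * (real (card I) * (tilt t (\<lambda>x. (f x)\<^sup>2) * tilt t (\<lambda>_. 1) - (tilt t f)\<^sup>2) * laplace t ^ (card I - 1))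
          \<partial>lborel)"
    unfolding inner .
qed

lemma f_mult_PN_eq:
  assumes N: "N \<ge> 1" and x: "x \<in> space M" "w x > 0"
  shows "f x * PN M p q N f x = (f x)\<^sup>2 - (\<integral>zs. f x * snis_error {2..N} x zs \<partial>Q_pow {2..N})"
proof -
  interpret Q_pow: prob_space "Q_pow {2..N}" by (rule prob_space_Q_pow)
  have "(\<integral>zs. f x * snis_estimate {2..N} x zs \<partial>Q_pow {2..N})
      = (\<integral>zs. (f x)\<^sup>2 - f x * snis_error {2..N} x zs \<partial>Q_pow {2..N})"
    using snis_estimate_eq[OF x]
    by (intro Bochner_Integration.integral_cong refl) (simp add: power2_eq_square right_diff_distrib)
  then show ?thesis
    using integrable_f_mult_snis_error[OF _ x] by (simp add: PN_eq_integral_snis_estimate[OF N] Q_pow.prob_space)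
qed

lemma
  assumes N: "N \<ge> 1"
  shows integrable_f_mult_PN: "integrable P (\<lambda>x. f x * PN M p q N f x)"
    and inner_PN_eq_integral_kernel:
      "pi_inner M p f (PN M p q N f) = (\<integral>x. (f x)\<^sup>2 \<partial>P) - (\<integral>t. indicator {0..} t
           * (real (N - 1) * (tilt t (\<lambda>x. (f x)\<^sup>2) * tilt t (\<lambda>_. 1) - (tilt t f)\<^sup>2) * laplace t ^ (N - 1 - 1))
          \<partial>lborel)"
proof -
  let ?I = "{2..N}"
  interpret pair_sigma_finite P "Q_pow ?I" by (rule pair_sigma_finite_P_Q_pow)
  interpret Q_pow: prob_space "Q_pow ?I" by (rule prob_space_Q_pow)
  have I: "finite ?I" and card: "card ?I = N - 1" by simp_all
  have int: "integrable (P \<Otimes>\<^sub>M Q_pow ?I) (\<lambda>xz. f (fst xz) * snis_error ?I (fst xz) (snd xz))"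
    by (rule integrable_f_mult_snis_error_pair[OF I])
  have ae: "AE x in P. f x * PN M p q N f x = (f x)\<^sup>2 - (\<integral>zs. f x * snis_error ?I x zs \<partial>Q_pow ?I)"
    using AE_space AE_P_p_pos
  proof eventually_elim
    case (elim x)
    then show ?case using f_mult_PN_eq[OF N, of x] w_pos[of x] by simp
  qed
  have [measurable]: "(\<lambda>x. f x * PN M p q N f x) \<in> borel_measurable P"
    unfolding PN_eq_integral_snis_estimate[OF N] snis_estimate_def wsum_def by measurable
  have int_inner: "integrable P (\<lambda>x. (f x)\<^sup>2 - (\<integral>zs. f x * snis_error ?I x zs \<partial>Q_pow ?I))"
    using f_square_integrable integrable_fst'[OF int] by simp
  then show "integrable P (\<lambda>x. f x * PN M p q N f x)"
    by (rule integrable_cong_AE_imp) (use ae in auto)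
  have "pi_inner M p f (PN M p q N f) = (\<integral>x. (f x)\<^sup>2 - (\<integral>zs. f x * snis_error ?I x zs \<partial>Q_pow ?I) \<partial>P)"
    unfolding pi_inner_def using ae int_inner by (intro integral_cong_AE) auto
  also have "\<dots> = (\<integral>x. (f x)\<^sup>2 \<partial>P) - (\<integral>xz. f (fst xz) * snis_error ?I (fst xz) (snd xz) \<partial>(P \<Otimes>\<^sub>M Q_pow ?I))"
    using f_square_integrable integrable_fst'[OF int] integral_fst'[OF int] by simp
  finally show "pi_inner M p f (PN M p q N f) = (\<integral>x. (f x)\<^sup>2 \<partial>P) - (\<integral>t. indicator {0..} t
           * (real (N - 1) * (tilt t (\<lambda>x. (f x)\<^sup>2) * tilt t (\<lambda>_. 1) - (tilt t f)\<^sup>2) * laplace t ^ (N - 1 - 1))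
          \<partial>lborel)"
    unfolding integral_f_mult_snis_error_pair[OF I] card .
qed

end

section \<open>Layer-cake representation\<close>

context isir
begin

text \<open>\<open>n C L\<^sup>n\<^sup>-\<^sup>1 = - (L\<^sup>n)'\<close> for \<open>L = laplace\<close> and \<open>C t = tilt t (\<lambda>_. 1) = - L' t\<close>; the identity is
  proved in integrated form (\<open>integral_laplace_pow_density\<close>) by Fubini, without differentiating
  under the integral sign.\<close>
definition laplace_pow_density :: "nat \<Rightarrow> real \<Rightarrow> real" where
  "laplace_pow_density n t = real n * tilt t (\<lambda>_. 1) * laplace t ^ (n - 1)"

lemma borel_measurable_laplace_pow_density[measurable]: "laplace_pow_density n \<in> borel_measurable borel"
  unfolding laplace_pow_density_def[abs_def] by measurable

lemma laplace_pow_density_nonneg: "t \<ge> 0 \<Longrightarrow> 0 \<le> laplace_pow_density n t"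
  unfolding laplace_pow_density_def using tilt_one_pos[of t] laplace_pos[of t] by simp

lemma wsum_mult_exp_neg_wsum:
  assumes "finite I"
  shows "wsum I zs * exp (- (t * wsum I zs))
    = (\<Sum>i\<in>I. w (zs i) * exp (- (t * w (zs i))) * (\<Prod>j\<in>I-{i}. exp (- (t * w (zs j)))))"
proof -
  have "wsum I zs * exp (- (t * wsum I zs)) = (\<Sum>i\<in>I. w (zs i) * (\<Prod>j\<in>I. exp (- (t * w (zs j)))))"
    unfolding exp_neg_wsum[OF assms] by (simp add: wsum_def sum_distrib_right)
  also have "\<dots> = (\<Sum>i\<in>I. w (zs i) * exp (- (t * w (zs i))) * (\<Prod>j\<in>I-{i}. exp (- (t * w (zs j)))))"
  proof (intro sum.cong refl)
    fix i assume "i \<in> I"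
    then show "w (zs i) * (\<Prod>j\<in>I. exp (- (t * w (zs j))))
        = w (zs i) * exp (- (t * w (zs i))) * (\<Prod>j\<in>I-{i}. exp (- (t * w (zs j))))"
      using prod.remove[OF assms, of i "\<lambda>j. exp (- (t * w (zs j)))"] by (simp add: mult.assoc)
  qed
  finally show ?thesis .
qed

lemma integral_Q_pow_wsum_mult_exp_neg_wsum:
  assumes I: "finite I" and t: "t \<ge> 0"
  shows "(\<integral>zs. wsum I zs * exp (- (t * wsum I zs)) \<partial>Q_pow I) = laplace_pow_density (card I) t"
proof -
  have "(\<integral>zs. wsum I zs * exp (- (t * wsum I zs)) \<partial>Q_pow I) = (\<integral>zs. (\<Sum>i\<in>I. w (zs i)
      * exp (- (t * w (zs i))) * (\<Prod>j\<in>I-{i}. exp (- (t * w (zs j))))) \<partial>Q_pow I)"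
    by (simp add: wsum_mult_exp_neg_wsum[OF I])
  also have "\<dots> = (\<Sum>i\<in>I. tilt t (\<lambda>_. 1) * laplace t ^ (card I - 1))"
    using integrable_Q_pow_tilted_component[OF I _ t integrable_P_const[of 1], unfolded mult_1]
      integral_Q_pow_tilted_component[OF I _ t integrable_P_const[of 1], unfolded mult_1]
    by (subst Bochner_Integration.integral_sum) auto
  finally show ?thesis by (simp add: laplace_pow_density_def)
qed

lemma integral_Q_pow_exp_neg_wsum:
  assumes I: "finite I" and T: "T \<ge> 0"
  shows "(\<integral>zs. exp (- (T * wsum I zs)) \<partial>Q_pow I) = laplace T ^ card I"
proof -
  interpret product_prob_space "\<lambda>_. Q" I by (rule product_prob_spaceI) (rule prob_space_Q)
  show ?thesis
    using product_integral_prod[OF I, of "\<lambda>_ z. exp (- (T * w z))"] integrable_Q_exp_neg_w[OF T]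
    by (simp add: exp_neg_wsum[OF I] laplace_def)
qed

lemma
  assumes T: "T \<ge> 0"
  shows integrable_laplace_pow_density: "integrable lborel (\<lambda>t. indicator {0..T} t * laplace_pow_density n t)"
    and integral_laplace_pow_density:
      "(\<integral>t. indicator {0..T} t * laplace_pow_density n t \<partial>lborel) = 1 - laplace T ^ n"
proof -
  let ?I = "{..<n}"
  interpret pair_sigma_finite "Q_pow ?I" lborel
    by (intro pair_sigma_finite.intro prob_space_imp_sigma_finite prob_space_Q_pow
        lborel.sigma_finite_measure_axioms)
  interpret Q_pow: prob_space "Q_pow ?I" by (rule prob_space_Q_pow)
  define G where "G = (\<lambda>zs t. indicator {0..T} t * (wsum ?I zs * exp (- (t * wsum ?I zs))))"
  have [measurable]: "case_prod G \<in> borel_measurable (Q_pow ?I \<Otimes>\<^sub>M lborel)"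
    unfolding G_def wsum_def by measurable
  have G_int: "integrable lborel (G zs)" and G_integral: "(\<integral>t. G zs t \<partial>lborel) = 1 - exp (- (T * wsum ?I zs))"
    and G_abs: "\<And>t. \<bar>G zs t\<bar> = G zs t"
    if "zs \<in> space (Q_pow ?I)" for zs
    using integrable_exp_neg_Icc[OF wsum_nonneg[OF that] T] integral_exp_neg_Icc[OF wsum_nonneg[OF that] T]
      wsum_nonneg[OF that]
    by (auto simp: G_def fun_eq_iff abs_mult indicator_def)
  have int_exp: "integrable (Q_pow ?I) (\<lambda>zs. exp (- (T * wsum ?I zs)))"
  proof (rule Bochner_Integration.integrable_bound[of _ "\<lambda>_. 1::real"])
    show "AE zs in Q_pow ?I. norm (exp (- (T * wsum ?I zs))) \<le> norm (1::real)"
      using wsum_nonneg T by (intro AE_I2) simp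
  qed (auto simp: wsum_def)
  have int: "integrable (Q_pow ?I \<Otimes>\<^sub>M lborel) (case_prod G)"
  proof (rule Fubini_integrable)
    have "integrable (Q_pow ?I) (\<lambda>zs. 1 - exp (- (T * wsum ?I zs)))" using int_exp by simp
    then show "integrable (Q_pow ?I) (\<lambda>zs. \<integral>t. norm (case_prod G (zs, t)) \<partial>lborel)"
      by (rule Bochner_Integration.integrable_cong[OF refl, THEN iffD1, rotated])
        (simp add: G_abs G_integral)
  qed (use G_int in auto)
  have inner: "(\<integral>zs. G zs t \<partial>Q_pow ?I) = indicator {0..T} t * laplace_pow_density n t" for t
    using integral_Q_pow_wsum_mult_exp_neg_wsum[of ?I t] by (cases "t \<in> {0..T}") (simp_all add: G_def)
  show "integrable lborel (\<lambda>t. indicator {0..T} t * laplace_pow_density n t)"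
    using integrable_snd[OF int] unfolding inner .
  have "(\<integral>t. (\<integral>zs. G zs t \<partial>Q_pow ?I) \<partial>lborel) = (\<integral>zs. 1 - exp (- (T * wsum ?I zs)) \<partial>Q_pow ?I)"
    using integral_snd[OF int] integral_fst'[OF int] G_integral
    by (simp cong: Bochner_Integration.integral_cong)
  also have "\<dots> = 1 - laplace T ^ n"
    using integral_Q_pow_exp_neg_wsum[of ?I T] T int_exp by (simp add: Q_pow.prob_space)
  finally show "(\<integral>t. indicator {0..T} t * laplace_pow_density n t \<partial>lborel) = 1 - laplace T ^ n"
    unfolding inner .
qed

lemma tilted_var_level_set:
  assumes y: "y > 0"
  obtains T where "T \<ge> 0" "{0..<T} \<subseteq> {t. 0 \<le> t \<and> y < tilted_var t}" "{t. 0 \<le> t \<and> y < tilted_var t} \<subseteq> {0..T}"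
    "y < tilted_var 1 \<Longrightarrow> 1 \<le> T" "f_variance \<le> y \<Longrightarrow> T = 0"
proof (cases "{t. 0 \<le> t \<and> y < tilted_var t} = {}")
  case True
  then show ?thesis by (intro that[of 0]) auto
next
  case False
  let ?U = "{t. 0 \<le> t \<and> y < tilted_var t}"
  obtain t0 where t0: "t0 \<ge> 0" "tilted_var t0 \<le> y" using tilted_var_eventually_le[OF y] by auto
  have "t < t0" if "t \<in> ?U" for t
    using that t0 tilted_var_antimono[of t0 t] by (cases "t < t0") auto
  then have bdd: "bdd_above ?U" by (intro bdd_aboveI[of _ t0]) (auto intro: less_imp_le)
  have "s \<in> ?U" if "0 \<le> s" "s < Sup ?U" for s
  proof -
    have "\<exists>t\<in>?U. s < t" using less_cSup_iff[OF False bdd] that(2) by blast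
    then obtain t where "t \<in> ?U" "s < t" by blast
    then show ?thesis using that tilted_var_antimono[of s t] by auto
  qed
  moreover have "t \<le> Sup ?U" if "t \<in> ?U" for t using cSup_upper[OF that bdd] .
  moreover have "?U = {}" if "f_variance \<le> y" using that tilted_var_le_f_variance by force
  ultimately show ?thesis using False by (intro that[of "Sup ?U"]) force+
qed

definition level_mass :: "nat \<Rightarrow> real \<Rightarrow> ennreal" where
  "level_mass n y =
     (\<integral>\<^sup>+t. ennreal (if 0 \<le> t \<and> 0 < y \<and> y < tilted_var t then laplace_pow_density n t else 0) \<partial>lborel)"

lemma borel_measurable_level_mass[measurable]: "level_mass n \<in> borel_measurable borel"
proof -
  have "(\<lambda>y. \<integral>\<^sup>+t. ennreal (if 0 \<le> t \<and> 0 < y \<and> y < tilted_var t then laplace_pow_density n t else 0)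
      \<partial>lborel) \<in> borel_measurable lborel"
    by (rule lborel.borel_measurable_nn_integral) measurable
  then show ?thesis unfolding level_mass_def[abs_def] by simp
qed

lemma level_mass_eq:
  assumes y: "y > 0"
  obtains T where "T \<ge> 0" "\<And>n. level_mass n y = ennreal (1 - laplace T ^ n)"
    "y < tilted_var 1 \<Longrightarrow> 1 \<le> T" "f_variance \<le> y \<Longrightarrow> T = 0"
proof -
  obtain T where T: "T \<ge> 0" "{0..<T} \<subseteq> {t. 0 \<le> t \<and> y < tilted_var t}" "{t. 0 \<le> t \<and> y < tilted_var t} \<subseteq> {0..T}"
    "y < tilted_var 1 \<Longrightarrow> 1 \<le> T" "f_variance \<le> y \<Longrightarrow> T = 0"
    using tilted_var_level_set[OF y] by blast
  have "level_mass n y = (\<integral>\<^sup>+t. ennreal (indicator {0..T} t * laplace_pow_density n t) \<partial>lborel)" for n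
    unfolding level_mass_def
  proof (rule nn_integral_cong_AE)
    show "AE t in lborel. ennreal (if 0 \<le> t \<and> 0 < y \<and> y < tilted_var t then laplace_pow_density n t else 0)
        = ennreal (indicator {0..T} t * laplace_pow_density n t)"
      using AE_lborel_singleton[of T]
    proof eventually_elim
      case (elim t)
      then have "0 \<le> t \<and> y < tilted_var t \<longleftrightarrow> t \<in> {0..T}" using T(2,3) by fastforce
      then show ?case using y by (simp add: indicator_def)
    qed
  qed
  also have "\<dots> n = ennreal (1 - laplace T ^ n)" for n
    using integrable_laplace_pow_density[OF T(1)] integral_laplace_pow_density[OF T(1)] laplace_pow_density_nonneg
    by (subst nn_integral_eq_integral) (auto simp: indicator_def)
  finally show ?thesis by (rule that[OF T(1) _ T(4,5)])
qed

text \<open>For \<open>y > 0\<close> this is \<open>laplace T\<close>, where \<open>[0, T)\<close> is the level set \<open>{t. y < tilted_var t}\<close> up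
  to an endpoint; defining it through \<open>level_mass\<close> makes its measurability in \<open>y\<close> immediate.\<close>
definition level_laplace :: "real \<Rightarrow> real" where
  "level_laplace y = 1 - enn2real (level_mass 1 y)"

lemma borel_measurable_level_laplace[measurable]: "level_laplace \<in> borel_measurable borel"
  unfolding level_laplace_def[abs_def] by measurable

lemma level_laplace_eq:
  assumes y: "y > 0"
  obtains T where "T \<ge> 0" "level_laplace y = laplace T" "\<And>n. level_mass n y = ennreal (1 - level_laplace y ^ n)"
    "y < tilted_var 1 \<Longrightarrow> 1 \<le> T" "f_variance \<le> y \<Longrightarrow> T = 0"
proof -
  obtain T where T: "T \<ge> 0" "\<And>n. level_mass n y = ennreal (1 - laplace T ^ n)"
    "y < tilted_var 1 \<Longrightarrow> 1 \<le> T" "f_variance \<le> y \<Longrightarrow> T = 0"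
    using level_mass_eq[OF y] by blast
  have eq: "level_laplace y = laplace T"
    using T(2)[of 1] laplace_le_1[OF T(1)] by (simp add: level_laplace_def)
  have "level_mass n y = ennreal (1 - level_laplace y ^ n)" for n using T(2) eq by simp
  then show ?thesis by (rule that[OF T(1) eq _ T(3,4)])
qed

lemma level_laplace_bounds: "y > 0 \<Longrightarrow> 0 < level_laplace y \<and> level_laplace y \<le> 1"
  by (metis level_laplace_eq laplace_pos laplace_le_1)

lemma level_laplace_less_1: "y > 0 \<Longrightarrow> y < tilted_var 1 \<Longrightarrow> level_laplace y < 1"
  by (metis level_laplace_eq laplace_less_1 less_le_trans zero_less_one)

lemma level_mass_eq_indicator:
  "level_mass n y = ennreal (indicator {0<..<f_variance} y * (1 - level_laplace y ^ n))"
proof (cases "y > 0")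
  case True
  obtain T where "level_mass n y = ennreal (1 - level_laplace y ^ n)" "f_variance \<le> y \<Longrightarrow> T = 0"
    "level_laplace y = laplace T"
    using level_laplace_eq[OF True] by metis
  then show ?thesis using True laplace_0 by (cases "y < f_variance") auto
qed (simp add: level_mass_def)

lemma tilt_mult_tilted_var:
  "t \<ge> 0 \<Longrightarrow> tilt t (\<lambda>x. (f x)\<^sup>2) * tilt t (\<lambda>_. 1) - (tilt t f)\<^sup>2 = tilted_var t * tilt t (\<lambda>_. 1)"
  using tilt_one_pos[of t] unfolding tilted_var_def by (simp add: field_simps)

lemma kernel_eq_tilted_var_density:
  "(\<lambda>t. indicator {0..} t * (real m * (tilt t (\<lambda>x. (f x)\<^sup>2) * tilt t (\<lambda>_. 1) - (tilt t f)\<^sup>2) * laplace t ^ (m - 1)))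
    = (\<lambda>t. indicator {0..} t * (tilted_var t * laplace_pow_density m t))"
proof
  fix t :: real
  show "indicator {0..} t * (real m * (tilt t (\<lambda>x. (f x)\<^sup>2) * tilt t (\<lambda>_. 1) - (tilt t f)\<^sup>2) * laplace t ^ (m - 1))
      = indicator {0..} t * (tilted_var t * laplace_pow_density m t)"
  proof (cases "t \<ge> 0")
    case True
    then show ?thesis unfolding tilt_mult_tilted_var[OF True] laplace_pow_density_def by (simp add: algebra_simps)
  qed simp
qed

lemma integrable_tilted_var_density:
  "integrable lborel (\<lambda>t. indicator {0..} t * (tilted_var t * laplace_pow_density n t))"
  using integrable_error_kernel[of "{..<n}", unfolded card_lessThan kernel_eq_tilted_var_density] by simp

lemma inner_PN_eq_integral_tilted_var:
  "N \<ge> 1 \<Longrightarrow> pi_inner M p f (PN M p q N f)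
     = (\<integral>x. (f x)\<^sup>2 \<partial>P) - (\<integral>t. indicator {0..} t * (tilted_var t * laplace_pow_density (N - 1) t) \<partial>lborel)"
  using inner_PN_eq_integral_kernel[unfolded kernel_eq_tilted_var_density] .

text \<open>Write \<open>tilted_var t = \<integral>\<^sub>0\<^sup>\<infinity> [y < tilted_var t] dy\<close> and integrate in \<open>t\<close> first.\<close>
lemma integral_tilted_var_density_eq:
  "(\<integral>t. indicator {0..} t * (tilted_var t * laplace_pow_density n t) \<partial>lborel)
    = (\<integral>y. indicator {0<..<f_variance} y * (1 - level_laplace y ^ n) \<partial>lborel)"
proof -
  let ?h = "\<lambda>t. indicator {0..} t * (tilted_var t * laplace_pow_density n t)"
  let ?g = "\<lambda>y. indicator {0<..<f_variance} y * (1 - level_laplace y ^ n)"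
  let ?k = "\<lambda>t y. ennreal (if 0 \<le> t \<and> 0 < y \<and> y < tilted_var t then laplace_pow_density n t else 0)"
  have g_bounds: "0 \<le> ?g y" "?g y \<le> indicator {0<..<f_variance} y" for y
    using level_laplace_bounds[of y] by (auto simp: indicator_def power_le_one)
  have g_int: "integrable lborel ?g"
  proof (rule Bochner_Integration.integrable_bound)
    show "integrable lborel (\<lambda>y. indicator {0<..<f_variance} y :: real)" using f_variance_nonneg by simp
  qed (use g_bounds in auto)
  have h_eq: "ennreal (?h t) = (\<integral>\<^sup>+y. ?k t y \<partial>lborel)" for t
  proof (cases "t \<ge> 0")
    case True
    have "(\<integral>\<^sup>+y. ?k t y \<partial>lborel) = (\<integral>\<^sup>+y. ennreal (laplace_pow_density n t) * indicator {0<..<tilted_var t} y \<partial>lborel)"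
      using True by (intro nn_integral_cong) (auto simp: indicator_def)
    also have "\<dots> = ennreal (?h t)"
      using True tilted_var_nonneg[OF True] laplace_pow_density_nonneg[OF True]
      by (simp add: nn_integral_cmult_indicator ennreal_mult[symmetric] mult.commute)
    finally show ?thesis ..
  qed simp
  have "ennreal (\<integral>t. ?h t \<partial>lborel) = (\<integral>\<^sup>+t. ennreal (?h t) \<partial>lborel)"
    using integrable_tilted_var_density tilted_var_nonneg laplace_pow_density_nonneg
    by (intro nn_integral_eq_integral[symmetric]) (auto simp: indicator_def)
  also have "\<dots> = (\<integral>\<^sup>+t. (\<integral>\<^sup>+y. ?k t y \<partial>lborel) \<partial>lborel)" unfolding h_eq ..
  also have "\<dots> = (\<integral>\<^sup>+y. (\<integral>\<^sup>+t. ?k t y \<partial>lborel) \<partial>lborel)"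
    by (rule lborel_pair.Fubini'[symmetric]) measurable
  also have "\<dots> = (\<integral>\<^sup>+y. ennreal (?g y) \<partial>lborel)"
    using level_mass_eq_indicator by (simp add: level_mass_def)
  also have "\<dots> = ennreal (\<integral>y. ?g y \<partial>lborel)"
    using g_int g_bounds by (intro nn_integral_eq_integral) auto
  finally show ?thesis
    using g_bounds by (subst (asm) ennreal_inj) (auto intro: integral_nonneg_AE
        simp: tilted_var_nonneg laplace_pow_density_nonneg indicator_def)
qed

lemma unit_bounded_level_laplace: "unit_bounded_on_interval f_variance level_laplace"
proof
  fix y :: real assume "0 < y"
  then show "0 \<le> level_laplace y \<and> level_laplace y \<le> 1" using level_laplace_bounds[of y] by simp
qed (use f_variance_nonneg in auto)

lemma integral_sq_eq_mean_sq_plus_f_variance: "(\<integral>x. (f x)\<^sup>2 \<partial>P) = (pi_mean M p f)\<^sup>2 + f_variance"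
proof -
  interpret prob_space P by (rule prob_space_P)
  show ?thesis
    using tilt_sq_diff[of 0 "pi_mean M p f"]
    by (simp add: tilt_def f_variance_def pi_mean_def power2_eq_square)
qed

end

sublocale isir \<subseteq> level: unit_bounded_on_interval f_variance level_laplace
  by (rule unit_bounded_level_laplace)

context isir
begin

lemma inner_PN_eq_moment:
  assumes "N \<ge> 1"
  shows "pi_inner M p f (PN M p q N f) = (pi_mean M p f)\<^sup>2 + interval_moment f_variance level_laplace (N - 1)"
proof -
  have "(\<integral>y. indicator {0<..<f_variance} y * (1 - level_laplace y ^ (N - 1)) \<partial>lborel)
      = interval_moment f_variance level_laplace 0 - interval_moment f_variance level_laplace (N - 1)"
    unfolding interval_moment_def using level.integrable_moment level.integrable_moment[of 0]
    by (subst Bochner_Integration.integral_diff[symmetric]) (auto simp: algebra_simps)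
  then show ?thesis
    using inner_PN_eq_integral_tilted_var[OF assms] integral_tilted_var_density_eq
      integral_sq_eq_mean_sq_plus_f_variance level.interval_moment_0 by simp
qed

lemma inner_PN_nonneg: "N \<ge> 1 \<Longrightarrow> 0 \<le> pi_inner M p f (PN M p q N f)"
  using inner_PN_eq_moment level.interval_moment_nonneg by simp

lemma decreasing_convex_inner_PN: "decreasing_convex_seq (\<lambda>N. pi_inner M p f (PN M p q N f))"
proof
  fix n :: nat assume "n \<ge> 1"
  then show "pi_inner M p f (PN M p q (Suc n) f) \<le> pi_inner M p f (PN M p q n f)"
    and "pi_inner M p f (PN M p q (Suc n) f) - pi_inner M p f (PN M p q n f)
      \<le> pi_inner M p f (PN M p q (Suc (Suc n)) f) - pi_inner M p f (PN M p q (Suc n) f)"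
    using inner_PN_eq_moment[of n] inner_PN_eq_moment[of "Suc n"] inner_PN_eq_moment[of "Suc (Suc n)"]
      level.interval_moment_Suc_le[of "n - 1"] level.interval_moment_convex[of "n - 1"]
    by (simp_all add: Suc_diff_le)
qed

lemma inner_Plam_eq_lin_interp:
  assumes "lam \<ge> 1"
  shows "pi_inner M p f (Plam M p q lam f) = lin_interp (\<lambda>N. pi_inner M p f (PN M p q N f)) lam"
proof -
  let ?n = "nat \<lfloor>lam\<rfloor>" and ?\<beta> = "real (nat \<lfloor>lam\<rfloor>) + 1 - lam"
  have "?n \<ge> 1" using nat_floor_bounds[OF assms] by simp
  then have "pi_inner M p f (Plam M p q lam f)
      = (\<integral>x. ?\<beta> * (f x * PN M p q ?n f x) + (1 - ?\<beta>) * (f x * PN M p q (?n + 1) f x) \<partial>P)"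
    unfolding pi_inner_def Plam_def Let_def by (intro Bochner_Integration.integral_cong refl) (simp add: algebra_simps)
  also have "\<dots> = ?\<beta> * pi_inner M p f (PN M p q ?n f) + (1 - ?\<beta>) * pi_inner M p f (PN M p q (?n + 1) f)"
    unfolding pi_inner_def using integrable_f_mult_PN \<open>?n \<ge> 1\<close> by simp
  finally show ?thesis unfolding lin_interp_def Let_def .
qed

lemma pi_norm_eq: "pi_norm M p f = sqrt ((pi_mean M p f)\<^sup>2 + f_variance)"
  using integral_sq_eq_mean_sq_plus_f_variance by (simp add: pi_norm_def pi_inner_def power2_eq_square)

lemma pi_norm_centered: "pi_norm M p (\<lambda>x. f x - pi_mean M p f) = sqrt f_variance"
  by (simp add: pi_norm_def pi_inner_def f_variance_def power2_eq_square)

lemma inner_PN_eq_0_iff: "N \<ge> 1 \<Longrightarrow> pi_inner M p f (PN M p q N f) = 0 \<longleftrightarrow> pi_norm M p f = 0"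
  using inner_PN_eq_moment[of N] level.interval_moment_nonneg[of "N - 1"]
    level.interval_moment_pos[of "N - 1"] level_laplace_bounds f_variance_nonneg
  by (cases "f_variance = 0") (auto simp: pi_norm_eq interval_moment_def add_nonneg_eq_0_iff)

lemma inner_Plam_eq_0_iff:
  assumes "lam \<ge> 1"
  shows "pi_inner M p f (Plam M p q lam f) = 0 \<longleftrightarrow> pi_norm M p f = 0"
proof
  assume "pi_inner M p f (Plam M p q lam f) = 0"
  then have "pi_inner M p f (PN M p q (nat \<lfloor>lam\<rfloor>) f) = 0"
    using lin_interp_eq_0_imp[OF inner_PN_nonneg assms] inner_Plam_eq_lin_interp[OF assms] by simp
  then show "pi_norm M p f = 0" using inner_PN_eq_0_iff nat_floor_bounds[OF assms] by simp
next
  assume "pi_norm M p f = 0"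
  then have "pi_inner M p f (PN M p q N f) = 0" if "N \<ge> 1" for N using inner_PN_eq_0_iff that by simp
  then show "pi_inner M p f (Plam M p q lam f) = 0"
    using inner_Plam_eq_lin_interp[OF assms] nat_floor_bounds[OF assms] by (simp add: lin_interp_def Let_def)
qed

lemma inner_Plam_strict_antimono_iff:
  "(\<forall>a b. 1 \<le> a \<longrightarrow> a < b \<longrightarrow> pi_inner M p f (Plam M p q b f) < pi_inner M p f (Plam M p q a f))
    \<longleftrightarrow> pi_norm M p (\<lambda>x. f x - pi_mean M p f) > 0"
proof -
  interpret decreasing_convex_seq "\<lambda>N. pi_inner M p f (PN M p q N f)" by (rule decreasing_convex_inner_PN)
  have "(\<forall>a b. 1 \<le> a \<longrightarrow> a < b \<longrightarrow> pi_inner M p f (Plam M p q b f) < pi_inner M p f (Plam M p q a f))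
      \<longleftrightarrow> f_variance > 0"
  proof
    assume "f_variance > 0"
    then have "pi_inner M p f (PN M p q (Suc n) f) < pi_inner M p f (PN M p q n f)" if "n \<ge> 1" for n
      using that inner_PN_eq_moment[of n] inner_PN_eq_moment[of "Suc n"] tilted_var_1_pos
        level.interval_moment_Suc_less[of "tilted_var 1" "n - 1"] level_laplace_bounds level_laplace_less_1
      by (simp add: Suc_diff_le)
    then show "\<forall>a b. 1 \<le> a \<longrightarrow> a < b \<longrightarrow> pi_inner M p f (Plam M p q b f) < pi_inner M p f (Plam M p q a f)"
      using lin_interp_strict_antimono inner_Plam_eq_lin_interp by simp
  next
    assume "\<forall>a b. 1 \<le> a \<longrightarrow> a < b \<longrightarrow> pi_inner M p f (Plam M p q b f) < pi_inner M p f (Plam M p q a f)"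
    then have "pi_inner M p f (Plam M p q 2 f) < pi_inner M p f (Plam M p q 1 f)" by simp
    then have "pi_inner M p f (PN M p q 2 f) < pi_inner M p f (PN M p q 1 f)"
      using inner_Plam_eq_lin_interp[of 1] inner_Plam_eq_lin_interp[of 2] by (simp add: lin_interp_def)
    then show "f_variance > 0"
      using inner_PN_eq_moment[of 1] inner_PN_eq_moment[of 2] f_variance_nonneg
      by (cases "f_variance = 0") (auto simp: interval_moment_def)
  qed
  then show ?thesis using pi_norm_centered f_variance_nonneg by simp
qed

end

theorem theorem6p11:
  fixes M :: "'a measure" and p q f :: "'a \<Rightarrow> real"
  assumes "sigma_finite_measure M"
    and "p \<in> borel_measurable M" and "q \<in> borel_measurable M"
    and "\<forall>x\<in>space M. 0 \<le> p x" and "\<forall>x\<in>space M. 0 \<le> q x"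
    and "(\<integral>\<^sup>+x. ennreal (p x) \<partial>M) = 1" and "(\<integral>\<^sup>+x. ennreal (q x) \<partial>M) = 1"
    and "\<forall>x\<in>space M. p x > 0 \<longrightarrow> q x > 0"
    and "f \<in> borel_measurable M"
    and "integrable (density M (\<lambda>x. ennreal (p x))) (\<lambda>x. (f x)\<^sup>2)"
  defines "g \<equiv> (\<lambda>lam. pi_inner M p f (Plam M p q lam f))"
  shows "continuous_on {1..} g
    \<and> (\<forall>lam\<ge>1. 0 \<le> g lam)
    \<and> (\<forall>a b. 1 \<le> a \<longrightarrow> a \<le> b \<longrightarrow> g b \<le> g a)
    \<and> convex_on {1..} g
    \<and> (\<forall>lam\<ge>1. g lam = 0 \<longleftrightarrow> pi_norm M p f = 0)
    \<and> ((\<forall>a b. 1 \<le> a \<longrightarrow> a < b \<longrightarrow> g b < g a)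
        \<longleftrightarrow> pi_norm M p (\<lambda>x. f x - pi_mean M p f) > 0)"
proof -
  interpret isir M p q f by unfold_locales (use assms in auto)
  interpret decreasing_convex_seq "\<lambda>N. pi_inner M p f (PN M p q N f)" by (rule decreasing_convex_inner_PN)
  have g: "g lam = lin_interp (\<lambda>N. pi_inner M p f (PN M p q N f)) lam" if "lam \<ge> 1" for lam
    unfolding g_def by (rule inner_Plam_eq_lin_interp[OF that])
  have "continuous_on {1..} g" by (rule continuous_on_eq[OF continuous_on_lin_interp]) (simp add: g)
  moreover have "convex_on {1..} g" by (rule convex_on_cong[OF convex_on_lin_interp]) (simp add: g)
  moreover have "0 \<le> g lam" if "lam \<ge> 1" for lam using lin_interp_nonneg[OF inner_PN_nonneg that] g[OF that] by simp
  moreover have "g b \<le> g a" if "1 \<le> a" "a \<le> b" for a b using lin_interp_antimono[OF that] g that by simp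
  ultimately show ?thesis
    using inner_Plam_eq_0_iff inner_Plam_strict_antimono_iff unfolding g_def by blast
qed

end
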